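(* Let $\Gamma$ be a finitely generated group and $\Gamma_0$ a subgroup of finite index in $\Gamma$. Then $\rho(\Gamma_0)=\rho(\Gamma)$.
   Context: For a group $\Gamma$, $r_n(\Gamma)$ is the number of isomorphism classes of $n$-dimensional irreducible complex representations, $R_n(\Gamma)=\sum_{i=1}^n r_i(\Gamma)$, and $\rho(\Gamma)=\limsup_{n\to\infty}\frac{\log R_n(\Gamma)}{\log n}$, with $\rho(\Gamma)=\infty$ if some $R_n(\Gamma)$ is infinite or $R_n(\Gamma)$ is not polynomially bounded. *)

theory Defs
  imports "Jordan_Normal_Form.Matrix" "HOL-Algebra.Coset" "HOL-Algebra.Generated_Groups"
    "HOL-Library.Extended_Nat" "HOL-Library.Extended_Real" "HOL-Library.Liminf_Limsup"
begin

definition fin_gen_group :: "('g, 'b) monoid_scheme \<Rightarrow> bool" where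
  "fin_gen_group G \<longleftrightarrow> (\<exists>S. finite S \<and> S \<subseteq> carrier G \<and> generate G S = carrier G)"

text \<open>An n-dimensional complex representation: a monoid homomorphism from G into
  the n x n complex matrices (images are then automatically invertible).\<close>
definition is_rep :: "('g, 'b) monoid_scheme \<Rightarrow> nat \<Rightarrow> ('g \<Rightarrow> complex mat) \<Rightarrow> bool" where
  "is_rep G n \<rho> \<longleftrightarrow>
     (\<forall>g\<in>carrier G. \<rho> g \<in> carrier_mat n n) \<and>
     (\<forall>g\<in>carrier G. \<forall>h\<in>carrier G. \<rho> (g \<otimes>\<^bsub>G\<^esub> h) = \<rho> g * \<rho> h) \<and>
     \<rho> \<one>\<^bsub>G\<^esub> = 1\<^sub>m n"

definition is_subspace :: "nat \<Rightarrow> complex vec set \<Rightarrow> bool" where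
  "is_subspace n W \<longleftrightarrow> W \<subseteq> carrier_vec n \<and> 0\<^sub>v n \<in> W \<and>
     (\<forall>v\<in>W. \<forall>w\<in>W. v + w \<in> W) \<and> (\<forall>c::complex. \<forall>v\<in>W. c \<cdot>\<^sub>v v \<in> W)"

definition is_irrep :: "('g, 'b) monoid_scheme \<Rightarrow> nat \<Rightarrow> ('g \<Rightarrow> complex mat) \<Rightarrow> bool" where
  "is_irrep G n \<rho> \<longleftrightarrow> is_rep G n \<rho> \<and> n > 0 \<and>
     \<not> (\<exists>W. is_subspace n W \<and> W \<noteq> {0\<^sub>v n} \<and> W \<noteq> carrier_vec n \<and>
            (\<forall>g\<in>carrier G. \<forall>w\<in>W. \<rho> g *\<^sub>v w \<in> W))"

definition rep_iso :: "('g, 'b) monoid_scheme \<Rightarrow> nat \<Rightarrow> (('g \<Rightarrow> complex mat) \<times> ('g \<Rightarrow> complex mat)) set" where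
  "rep_iso G n = {(\<rho>, \<sigma>). \<exists>P\<in>carrier_mat n n. invertible_mat P \<and>
                      (\<forall>g\<in>carrier G. P * \<rho> g = \<sigma> g * P)}"

definition r_irr :: "('g, 'b) monoid_scheme \<Rightarrow> nat \<Rightarrow> enat" where
  "r_irr G n = (let C = {\<rho>. is_irrep G n \<rho>} // rep_iso G n in
                  if finite C then enat (card C) else \<infinity>)"

definition R_irr :: "('g, 'b) monoid_scheme \<Rightarrow> nat \<Rightarrow> enat" where
  "R_irr G n = (\<Sum>i\<in>{1..n}. r_irr G i)"

definition rep_growth :: "('g, 'b) monoid_scheme \<Rightarrow> ereal" where
  "rep_growth G = (if \<exists>n. R_irr G n = \<infinity> then \<infinity>
     else limsup (\<lambda>n. ereal (ln (real (the_enat (R_irr G n))) / ln (real n))))"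

end

(* If [G : H] = k, restriction and induction link the irreducible representations of G and H.
   Every irreducible pi of G maps onto some irreducible sigma of H, and every irreducible sigma
   of H receives a nonzero H-map from an irreducible subrepresentation of Ind sigma, whose
   dimension is at most k dim sigma.  By Frobenius reciprocity and Schur's lemma, pairwise
   non-isomorphic irreducibles pi mapping onto a fixed sigma embed into Ind sigma, of dimension
   k dim sigma, and have dimension at least dim sigma, so there are at most k of them; dually,
   at most k classes sigma receive a map from a fixed pi.  Hence R_n(G) <= k R_n(H) and
   R_n(H) <= k R_(kn)(G), and the two exponents coincide. *)

theory Submission
  imports Defs "Jordan_Normal_Form.Determinant"
begin

section \<open>Linear algebra over the complex numbers\<close>

definition inj_mat :: "complex mat \<Rightarrow> bool" where
  "inj_mat A \<longleftrightarrow> (\<forall>v\<in>carrier_vec (dim_col A). A *\<^sub>v v = 0\<^sub>v (dim_row A) \<longrightarrow> v = 0\<^sub>v (dim_col A))"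

definition col_space :: "complex mat \<Rightarrow> complex vec set" where
  "col_space A = (\<lambda>v. A *\<^sub>v v) ` carrier_vec (dim_col A)"

lemma mult_mat_vec_zero_right [simp]:
  "A \<in> carrier_mat nr nc \<Longrightarrow> (A :: complex mat) *\<^sub>v 0\<^sub>v nc = 0\<^sub>v nr"
  by (intro eq_vecI) auto

lemma zero_mult_mat_vec [simp]:
  "v \<in> carrier_vec nc \<Longrightarrow> (0\<^sub>m nr nc :: complex mat) *\<^sub>v v = 0\<^sub>v nr"
  by (intro eq_vecI) (auto simp: row_def scalar_prod_def)

lemma carrier_vec_0_eq: "v \<in> carrier_vec 0 \<Longrightarrow> v = 0\<^sub>v 0"
  by (intro eq_vecI) auto

lemma inj_matD:
  "inj_mat A \<Longrightarrow> A \<in> carrier_mat m n \<Longrightarrow> v \<in> carrier_vec n \<Longrightarrow> A *\<^sub>v v = 0\<^sub>v m \<Longrightarrow> v = 0\<^sub>v n"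
  unfolding inj_mat_def by auto

lemma inj_matI:
  assumes "A \<in> carrier_mat m n" and "\<And>v. v \<in> carrier_vec n \<Longrightarrow> A *\<^sub>v v = 0\<^sub>v m \<Longrightarrow> v = 0\<^sub>v n"
  shows "inj_mat A"
  using assms unfolding inj_mat_def by auto

lemma mat_eq_by_mult_vec:
  assumes X: "X \<in> carrier_mat N d" and Y: "Y \<in> carrier_mat N d"
    and eq: "\<And>v. v \<in> carrier_vec d \<Longrightarrow> X *\<^sub>v v = Y *\<^sub>v v"
  shows "X = (Y :: complex mat)"
proof (rule eq_matI)
  fix i j assume i: "i < dim_row Y" and j: "j < dim_col Y"
  have "(X *\<^sub>v unit_vec d j) $ i = X $$ (i,j)" "(Y *\<^sub>v unit_vec d j) $ i = Y $$ (i,j)"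
    using X Y i j by simp_all
  then show "X $$ (i,j) = Y $$ (i,j)" using eq[of "unit_vec d j"] by simp
qed (use X Y in auto)

lemma mult_assoc_square_right:
  assumes B: "(B::complex mat) \<in> carrier_mat n n" and C: "C \<in> carrier_mat n p"
  shows "(A * B) * C = A * (B * C)"
proof (rule eq_matI)
  fix i j assume i: "i < dim_row (A * (B * C))" and j: "j < dim_col (A * (B * C))"
  define a where "a = row A i"
  have "((A * B) * C) $$ (i, j) = (\<Sum>l\<in>{0..<n}. (\<Sum>m\<in>{0..<n}. a $ m * B $$ (m, l)) * C $$ (l, j))"
    using i j B C unfolding a_def by (simp add: scalar_prod_def)
  also have "\<dots> = (\<Sum>l\<in>{0..<n}. \<Sum>m\<in>{0..<n}. a $ m * B $$ (m, l) * C $$ (l, j))"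
    by (simp add: sum_distrib_right)
  also have "\<dots> = (\<Sum>m\<in>{0..<n}. \<Sum>l\<in>{0..<n}. a $ m * B $$ (m, l) * C $$ (l, j))"
    by (rule sum.swap)
  also have "\<dots> = (\<Sum>m\<in>{0..<n}. a $ m * (\<Sum>l\<in>{0..<n}. B $$ (m, l) * C $$ (l, j)))"
    by (simp add: sum_distrib_left mult.assoc)
  also have "\<dots> = (A * (B * C)) $$ (i, j)" using i j B C unfolding a_def by (simp add: scalar_prod_def)
  finally show "((A * B) * C) $$ (i, j) = (A * (B * C)) $$ (i, j)" .
qed (use B C in auto)

lemma mat_nonzero_imp_mult_vec_nonzero:
  fixes A :: "complex mat"
  assumes A: "A \<in> carrier_mat nr nc" and nz: "A \<noteq> 0\<^sub>m nr nc"
  obtains v where "v \<in> carrier_vec nc" "A *\<^sub>v v \<noteq> 0\<^sub>v nr"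
  using mat_eq_by_mult_vec[OF A zero_carrier_mat] nz that by (metis zero_mult_mat_vec)

lemma inj_mat_square_inverse:
  assumes A: "A \<in> carrier_mat n n" and inj: "inj_mat A"
  obtains B where "B \<in> carrier_mat n n" "A * B = 1\<^sub>m n" "B * A = 1\<^sub>m n"
proof -
  have "det A \<noteq> 0"
    using det_0_iff_vec_prod_zero[OF A] inj_matD[OF inj A] by auto
  from det_non_zero_imp_unit[OF A this, of undefined] that
  show ?thesis unfolding Units_def ring_mat_def by auto
qed

lemma inj_mat_square_invertible:
  assumes A: "A \<in> carrier_mat n n" and inj: "inj_mat A"
  shows "invertible_mat A"
proof -
  obtain B where "B \<in> carrier_mat n n" "A * B = 1\<^sub>m n" "B * A = 1\<^sub>m n"
    using inj_mat_square_inverse[OF A inj] .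
  then show ?thesis using A unfolding invertible_mat_def inverts_mat_def by auto
qed

lemma inj_mat_square_col_space:
  assumes A: "A \<in> carrier_mat n n" and inj: "inj_mat A"
  shows "col_space A = carrier_vec n"
proof -
  obtain B where B: "B \<in> carrier_mat n n" "A * B = 1\<^sub>m n" using inj_mat_square_inverse[OF A inj] .
  have "x \<in> col_space A" if x: "x \<in> carrier_vec n" for x
  proof -
    have "x = A *\<^sub>v (B *\<^sub>v x)" using A B x by (metis assoc_mult_mat_vec one_mult_mat_vec)
    then show ?thesis unfolding col_space_def using A B x by auto
  qed
  then show ?thesis using A unfolding col_space_def by auto
qed

text \<open>If \<open>N < d\<close>, padding \<open>A\<close> with zero rows gives an injective, hence invertible, square matrix
  with a zero last row.\<close>

lemma inj_mat_dim_le: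
  assumes A: "A \<in> carrier_mat N d" and inj: "inj_mat A"
  shows "d \<le> N"
proof (rule ccontr)
  assume "\<not> d \<le> N"
  hence Nd: "N < d" by simp
  define A' where "A' = mat d d (\<lambda>(i,j). if i < N then A $$ (i,j) else (0::complex))"
  have A'c: "A' \<in> carrier_mat d d" unfolding A'_def by simp
  have "inj_mat A'"
  proof (rule inj_matI[OF A'c])
    fix v :: "complex vec" assume v: "v \<in> carrier_vec d" and z: "A' *\<^sub>v v = 0\<^sub>v d"
    have "A *\<^sub>v v = 0\<^sub>v N"
    proof (rule eq_vecI)
      fix i assume "i < dim_vec (0\<^sub>v N :: complex vec)"
      hence i: "i < N" by simp
      have "(A' *\<^sub>v v) $ i = (A *\<^sub>v v) $ i"
        using i Nd A v unfolding A'_def by (auto simp: row_def scalar_prod_def)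
      then show "(A *\<^sub>v v) $ i = 0\<^sub>v N $ i" using z i Nd by simp
    qed (use A in simp)
    then show "v = 0\<^sub>v d" using inj_matD[OF inj A v] by simp
  qed
  then obtain B where B: "B \<in> carrier_mat d d" "A' * B = 1\<^sub>m d"
    using inj_mat_square_inverse[OF A'c] by metis
  have "\<not> d - 1 < N" using Nd by simp
  then have "(A' * B) $$ (d - 1, d - 1) = 0"
    using Nd B(1) unfolding A'_def by (auto simp: row_def scalar_prod_def)
  with B(2) Nd show False by simp
qed

lemma surj_mat_right_inverse:
  assumes A: "A \<in> carrier_mat m n" and surj: "carrier_vec m \<subseteq> col_space A"
  obtains X where "X \<in> carrier_mat n m" "A * X = 1\<^sub>m m"
proof -
  have "\<exists>v. v \<in> carrier_vec n \<and> A *\<^sub>v v = unit_vec m j" for j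
  proof -
    have "unit_vec m j \<in> (\<lambda>v. A *\<^sub>v v) ` carrier_vec (dim_col A)"
      using surj unit_vec_carrier unfolding col_space_def by blast
    then show ?thesis using A by auto
  qed
  then obtain pre where pre: "\<And>j. pre j \<in> carrier_vec n" "\<And>j. A *\<^sub>v pre j = unit_vec m j"
    by metis
  define X where "X = mat n m (\<lambda>(i,j). pre j $ i)"
  have "A * X = 1\<^sub>m m"
  proof (rule eq_matI)
    fix i j assume i: "i < dim_row (1\<^sub>m m :: complex mat)" and j: "j < dim_col (1\<^sub>m m :: complex mat)"
    have "col X j = pre j" using j pre(1)[of j] unfolding X_def by (auto simp: col_mat)
    then have "(A * X) $$ (i, j) = (A *\<^sub>v pre j) $ i" using i j A unfolding X_def by simp
    then show "(A * X) $$ (i, j) = 1\<^sub>m m $$ (i, j)" using i j pre(2) by simp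
  qed (use A in \<open>auto simp: X_def\<close>)
  moreover have "X \<in> carrier_mat n m" unfolding X_def by simp
  ultimately show ?thesis using that by blast
qed

lemma surj_mat_dim_le:
  assumes A: "A \<in> carrier_mat m n" and surj: "carrier_vec m \<subseteq> col_space A"
  shows "m \<le> n"
proof -
  obtain X where X: "X \<in> carrier_mat n m" "A * X = 1\<^sub>m m" using surj_mat_right_inverse[OF A surj] .
  have "inj_mat X"
  proof (rule inj_matI[OF X(1)])
    fix v assume v: "v \<in> carrier_vec m" and z: "X *\<^sub>v v = 0\<^sub>v n"
    have "v = (A * X) *\<^sub>v v" using X(2) v by simp
    also have "\<dots> = A *\<^sub>v (X *\<^sub>v v)" using A X(1) v by simp
    finally show "v = 0\<^sub>v m" using z A by simp
  qed
  from inj_mat_dim_le[OF X(1) this] show ?thesis .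
qed

lemma inj_mat_mult:
  assumes A: "A \<in> carrier_mat N d" and C: "C \<in> carrier_mat d e" and "inj_mat A" "inj_mat C"
  shows "inj_mat (A * C)"
proof (rule inj_matI)
  show "A * C \<in> carrier_mat N e" using A C by simp
  fix v assume v: "v \<in> carrier_vec e" and "A * C *\<^sub>v v = 0\<^sub>v N"
  then have "A *\<^sub>v (C *\<^sub>v v) = 0\<^sub>v N" using A C by simp
  then have "C *\<^sub>v v = 0\<^sub>v d" using inj_matD[OF \<open>inj_mat A\<close> A] C v by simp
  then show "v = 0\<^sub>v e" using inj_matD[OF \<open>inj_mat C\<close> C v] by simp
qed

lemma inj_mat_mult_nonzero:
  assumes A: "A \<in> carrier_mat N d" and C: "C \<in> carrier_mat d e" and inj: "inj_mat A"
    and nz: "C \<noteq> 0\<^sub>m d e"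
  shows "A * C \<noteq> 0\<^sub>m N e"
proof
  assume z: "A * C = 0\<^sub>m N e"
  obtain v where v: "v \<in> carrier_vec e" "C *\<^sub>v v \<noteq> 0\<^sub>v d"
    using mat_nonzero_imp_mult_vec_nonzero[OF C nz] .
  have "A *\<^sub>v (C *\<^sub>v v) = (A * C) *\<^sub>v v" using A C v by simp
  also have "\<dots> = 0\<^sub>v N" using z v by simp
  finally have "A *\<^sub>v (C *\<^sub>v v) = 0\<^sub>v N" .
  with v inj_matD[OF inj A] C show False by simp
qed

lemma inj_mat_nonzero:
  assumes A: "A \<in> carrier_mat N d" and inj: "inj_mat A" and d: "d > 0"
  shows "A \<noteq> 0\<^sub>m N d"
proof
  assume "A = 0\<^sub>m N d"
  then have "unit_vec d 0 = (0\<^sub>v d :: complex vec)" using inj_matD[OF inj A, of "unit_vec d 0"] by simp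
  then have "(unit_vec d 0 :: complex vec) $ 0 = 0\<^sub>v d $ 0" by simp
  then show False using d by simp
qed

lemma invertible_matE:
  assumes P: "P \<in> carrier_mat n n" and "invertible_mat P"
  obtains Q where "Q \<in> carrier_mat n n" "P * Q = 1\<^sub>m n" "Q * P = 1\<^sub>m n"
proof -
  obtain Q where "inverts_mat P Q" "inverts_mat Q P" using assms(2) unfolding invertible_mat_def by auto
  then have PQ: "P * Q = 1\<^sub>m n" and QP: "Q * P = 1\<^sub>m (dim_row Q)"
    using P unfolding inverts_mat_def by auto
  have "dim_col Q = n" using arg_cong[OF PQ, of dim_col] by simp
  moreover have "dim_row Q = n" using arg_cong[OF QP, of dim_col] P by simp
  ultimately show ?thesis using that PQ QP by auto
qed

lemma invertible_imp_inj_mat: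
  assumes P: "P \<in> carrier_mat n n" and "invertible_mat P"
  shows "inj_mat P"
proof (rule inj_matI[OF P])
  obtain Q where Q: "Q \<in> carrier_mat n n" "Q * P = 1\<^sub>m n" using invertible_matE[OF assms] by metis
  fix v assume v: "v \<in> carrier_vec n" and "P *\<^sub>v v = 0\<^sub>v n"
  have "v = (Q * P) *\<^sub>v v" using Q(2) v by simp
  also have "\<dots> = Q *\<^sub>v (P *\<^sub>v v)" using P Q(1) v by simp
  finally show "v = 0\<^sub>v n" using \<open>P *\<^sub>v v = 0\<^sub>v n\<close> Q(1) by simp
qed

lemma invertible_mat_mult:
  assumes P: "(P :: complex mat) \<in> carrier_mat n n" "invertible_mat P"
    and Q: "Q \<in> carrier_mat n n" "invertible_mat Q"
  shows "invertible_mat (Q * P)"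
proof (rule inj_mat_square_invertible[of _ n])
  show "Q * P \<in> carrier_mat n n" using P Q by simp
  show "inj_mat (Q * P)" using inj_mat_mult[OF Q(1) P(1)] invertible_imp_inj_mat P Q by blast
qed

lemma mult_invertible_nonzero:
  assumes Q: "(Q::complex mat) \<in> carrier_mat a n" and P: "P \<in> carrier_mat n n" "invertible_mat P"
    and nz: "Q \<noteq> 0\<^sub>m a n"
  shows "Q * P \<noteq> 0\<^sub>m a n"
proof
  assume z: "Q * P = 0\<^sub>m a n"
  obtain B where B: "B \<in> carrier_mat n n" "P * B = 1\<^sub>m n" using invertible_matE[OF P] by metis
  have "Q = Q * (P * B)" using Q B by simp
  also have "\<dots> = (Q * P) * B" using Q P B by (simp add: assoc_mult_mat[symmetric])
  finally have "Q = (Q * P) * B" .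
  with z B nz show False by simp
qed

lemma subspace_add: "is_subspace n W \<Longrightarrow> v \<in> W \<Longrightarrow> w \<in> W \<Longrightarrow> v + w \<in> W"
  and subspace_smult: "is_subspace n W \<Longrightarrow> v \<in> W \<Longrightarrow> c \<cdot>\<^sub>v v \<in> W"
  and subspace_zero: "is_subspace n W \<Longrightarrow> 0\<^sub>v n \<in> W"
  and subspace_carrier: "is_subspace n W \<Longrightarrow> v \<in> W \<Longrightarrow> v \<in> carrier_vec n"
  unfolding is_subspace_def by auto

lemma carrier_vec_subspace: "is_subspace n (carrier_vec n)"
  unfolding is_subspace_def by auto

lemma carrier_vec_nonzero:
  assumes "m > 0"
  shows "carrier_vec m \<noteq> {0\<^sub>v m :: complex vec}"
proof
  assume "carrier_vec m = {0\<^sub>v m :: complex vec}"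
  then have "unit_vec m 0 = (0\<^sub>v m :: complex vec)" using unit_vec_carrier[of m 0] by blast
  then have "(unit_vec m 0 :: complex vec) $ 0 = 0\<^sub>v m $ 0" by simp
  with assms show False by simp
qed

lemma kernel_subspace:
  assumes A: "A \<in> carrier_mat m n"
  shows "is_subspace n {v\<in>carrier_vec n. A *\<^sub>v v = 0\<^sub>v m}"
  unfolding is_subspace_def using A
  by (auto simp: mult_add_distrib_mat_vec mult_mat_vec)

lemma col_space_subspace:
  assumes A: "A \<in> carrier_mat m n"
  shows "is_subspace m (col_space A)"
  unfolding is_subspace_def col_space_def
proof (intro conjI ballI allI)
  show "(*\<^sub>v) A ` carrier_vec (dim_col A) \<subseteq> carrier_vec m" using A by auto
  show "0\<^sub>v m \<in> (*\<^sub>v) A ` carrier_vec (dim_col A)"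
    using A by (intro image_eqI[of _ _ "0\<^sub>v n"]) auto
  fix v w assume "v \<in> (*\<^sub>v) A ` carrier_vec (dim_col A)" "w \<in> (*\<^sub>v) A ` carrier_vec (dim_col A)"
  then obtain x y where "x \<in> carrier_vec n" "y \<in> carrier_vec n" "v = A *\<^sub>v x" "w = A *\<^sub>v y"
    using A by auto
  then show "v + w \<in> (*\<^sub>v) A ` carrier_vec (dim_col A)"
    using A by (intro image_eqI[of _ _ "x + y"]) (auto simp: mult_add_distrib_mat_vec)
next
  fix c :: complex and v assume "v \<in> (*\<^sub>v) A ` carrier_vec (dim_col A)"
  then obtain x where "x \<in> carrier_vec n" "v = A *\<^sub>v x" using A by auto
  then show "c \<cdot>\<^sub>v v \<in> (*\<^sub>v) A ` carrier_vec (dim_col A)"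
    using A by (intro image_eqI[of _ _ "c \<cdot>\<^sub>v x"]) (auto simp: mult_mat_vec)
qed

lemma col_space_zero_cols: "B \<in> carrier_mat N 0 \<Longrightarrow> col_space B = {0\<^sub>v N}"
  unfolding col_space_def using carrier_vec_0_eq
  by (auto intro!: image_eqI[of _ _ "0\<^sub>v 0"] eq_vecI simp: row_def scalar_prod_def)

lemma col_space_mult_subset:
  assumes "B \<in> carrier_mat N d" "C \<in> carrier_mat d e"
  shows "col_space (B * C) \<subseteq> col_space B"
proof
  fix x assume "x \<in> col_space (B * C)"
  then obtain v where "v \<in> carrier_vec e" "x = B *\<^sub>v (C *\<^sub>v v)"
    using assms unfolding col_space_def by auto
  then show "x \<in> col_space B" using assms unfolding col_space_def by auto
qed

definition append_col :: "complex mat \<Rightarrow> complex vec \<Rightarrow> complex mat" where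
  "append_col B w = mat (dim_row B) (Suc (dim_col B)) (\<lambda>(i,j). if j < dim_col B then B $$ (i,j) else w $ i)"

lemma append_col_carrier: "B \<in> carrier_mat N d \<Longrightarrow> append_col B w \<in> carrier_mat N (Suc d)"
  unfolding append_col_def by simp

lemma append_col_mult_vec:
  assumes B: "B \<in> carrier_mat N d" and w: "w \<in> carrier_vec N" and v: "v \<in> carrier_vec (Suc d)"
  shows "append_col B w *\<^sub>v v = B *\<^sub>v vec d (\<lambda>j. v $ j) + v $ d \<cdot>\<^sub>v w"
  by (rule eq_vecI) (use B w v in \<open>auto simp: append_col_def row_def scalar_prod_def mult.commute\<close>)

lemma inj_mat_append_col:
  assumes B: "B \<in> carrier_mat N d" and inj: "inj_mat B"
    and w: "w \<in> carrier_vec N" and new: "w \<notin> col_space B"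
  shows "inj_mat (append_col B w)"
proof (rule inj_matI[OF append_col_carrier[OF B]])
  fix v assume v: "v \<in> carrier_vec (Suc d)" and z: "append_col B w *\<^sub>v v = 0\<^sub>v N"
  define u where "u = vec d (\<lambda>j. v $ j)"
  have u: "u \<in> carrier_vec d" unfolding u_def by simp
  have z2: "B *\<^sub>v u + v $ d \<cdot>\<^sub>v w = 0\<^sub>v N" using z append_col_mult_vec[OF B w v] unfolding u_def by simp
  have vd: "v $ d = 0"
  proof (rule ccontr)
    assume c: "v $ d \<noteq> 0"
    define u' where "u' = vec d (\<lambda>j. - (v $ j) / v $ d)"
    have "w = B *\<^sub>v u'"
    proof (rule eq_vecI)
      fix i assume "i < dim_vec (B *\<^sub>v u')"
      hence i: "i < N" using B by simp
      have "(B *\<^sub>v u + v $ d \<cdot>\<^sub>v w) $ i = 0" using z2 i by simp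
      hence e: "(B *\<^sub>v u) $ i + v $ d * w $ i = 0" using i B w u by simp
      have "(B *\<^sub>v u') $ i = - (B *\<^sub>v u) $ i / v $ d"
        using i B unfolding u'_def u_def
        by (simp add: row_def scalar_prod_def sum_divide_distrib sum_negf[symmetric])
      also have "\<dots> = w $ i" using e c by (simp add: field_simps add_eq_0_iff)
      finally show "w $ i = (B *\<^sub>v u') $ i" by simp
    qed (use B w in simp)
    moreover have "u' \<in> carrier_vec (dim_col B)" using B unfolding u'_def by simp
    ultimately have "w \<in> col_space B" unfolding col_space_def by blast
    with new show False by simp
  qed
  have "(0::complex) \<cdot>\<^sub>v w = 0\<^sub>v N" by (intro eq_vecI) (use w in auto)
  then have "B *\<^sub>v u = 0\<^sub>v N" using z2 vd B u by simp
  then have "u = 0\<^sub>v d" using inj_matD[OF inj B u] by simp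
  show "v = 0\<^sub>v (Suc d)"
  proof (rule eq_vecI)
    fix j assume "j < dim_vec (0\<^sub>v (Suc d) :: complex vec)"
    then have "j < d \<or> j = d" by auto
    then show "v $ j = 0\<^sub>v (Suc d) $ j"
    proof
      assume j: "j < d"
      have "u $ j = 0" using \<open>u = 0\<^sub>v d\<close> j by simp
      then show ?thesis using j unfolding u_def by simp
    qed (use vd in simp)
  qed (use v in simp)
qed

text \<open>A basis of \<open>W\<close> is an injective matrix with column space \<open>W\<close>; take one of maximal width,
  which exists because the width of an injective matrix is bounded by \<open>N\<close>.\<close>

lemma subspace_basis:
  assumes W: "is_subspace N W"
  obtains d B where "B \<in> carrier_mat N d" "inj_mat B" "col_space B = W"
proof -
  define D where "D = {d. \<exists>B\<in>carrier_mat N d. inj_mat B \<and> col_space B \<subseteq> W}"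
  have "col_space (0\<^sub>m N 0) = {0\<^sub>v N}" by (rule col_space_zero_cols) simp
  moreover have "inj_mat (0\<^sub>m N 0)" by (rule inj_matI[of _ N 0]) (auto dest: carrier_vec_0_eq)
  ultimately have "0 \<in> D" unfolding D_def using subspace_zero[OF W] by (auto intro!: bexI[of _ "0\<^sub>m N 0"])
  have fin: "finite D"
    by (rule finite_subset[of _ "{..N}"]) (auto simp: D_def dest: inj_mat_dim_le)
  define d where "d = Max D"
  have "d \<in> D" unfolding d_def using fin \<open>0 \<in> D\<close> by (intro Max_in) auto
  then obtain B where B: "B \<in> carrier_mat N d" "inj_mat B" "col_space B \<subseteq> W" unfolding D_def by auto
  have "col_space B = W"
  proof (rule ccontr)
    assume "col_space B \<noteq> W"
    then obtain w where wW: "w \<in> W" and new: "w \<notin> col_space B" using B(3) by auto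
    have w: "w \<in> carrier_vec N" using subspace_carrier[OF W wW] .
    have Bw: "append_col B w \<in> carrier_mat N (Suc d)" using append_col_carrier[OF B(1)] .
    have "col_space (append_col B w) \<subseteq> W"
    proof
      fix x assume "x \<in> col_space (append_col B w)"
      then obtain v where v: "v \<in> carrier_vec (Suc d)" "x = append_col B w *\<^sub>v v"
        unfolding col_space_def using Bw by auto
      have "B *\<^sub>v vec d (\<lambda>j. v $ j) \<in> W" using B unfolding col_space_def by auto
      then show "x \<in> W"
        using v append_col_mult_vec[OF B(1) w v(1)] subspace_add[OF W] subspace_smult[OF W wW] by simp
    qed
    then have "Suc d \<in> D"
      unfolding D_def using append_col_carrier[OF B(1)] inj_mat_append_col[OF B(1,2) w new] by blast
    then have "Suc d \<le> d" using fin unfolding d_def by simp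
    then show False by simp
  qed
  with B that show ?thesis by blast
qed

definition adjoint_mat :: "complex mat \<Rightarrow> complex mat" where
  "adjoint_mat B = mat (dim_col B) (dim_row B) (\<lambda>(i,j). cnj (B $$ (j,i)))"

lemma adjoint_mat_carrier [simp]: "B \<in> carrier_mat N d \<Longrightarrow> adjoint_mat B \<in> carrier_mat d N"
  unfolding adjoint_mat_def by auto

text \<open>\<open>B\<^sup>* B\<close> is injective because \<open>B\<^sup>* B v = 0\<close> forces \<open>\<parallel>B v\<parallel>\<^sup>2 = 0\<close>.\<close>

lemma inj_mat_left_inverse:
  assumes B: "B \<in> carrier_mat N d" and inj: "inj_mat B"
  obtains L where "L \<in> carrier_mat d N" "L * B = 1\<^sub>m d"
proof -
  define M where "M = adjoint_mat B * B"
  have Mc: "M \<in> carrier_mat d d" unfolding M_def by (rule mult_carrier_mat[OF adjoint_mat_carrier[OF B] B])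
  have "inj_mat M"
  proof (rule inj_matI[OF Mc])
    fix v assume v: "v \<in> carrier_vec d" and z: "M *\<^sub>v v = 0\<^sub>v d"
    define w where "w = B *\<^sub>v v"
    have wc: "w \<in> carrier_vec N" unfolding w_def using B v by simp
    have "adjoint_mat B *\<^sub>v w = 0\<^sub>v d" using z B v adjoint_mat_carrier[OF B] unfolding M_def w_def
      by simp
    have comp: "(\<Sum>i<N. cnj (B $$ (i,j)) * w $ i) = 0" if "j < d" for j
    proof -
      have "(adjoint_mat B *\<^sub>v w) $ j = 0" using \<open>adjoint_mat B *\<^sub>v w = 0\<^sub>v d\<close> that by simp
      then show ?thesis using that B wc unfolding adjoint_mat_def
        by (simp add: row_def scalar_prod_def lessThan_atLeast0)
    qed
    have "w \<bullet>c w = (\<Sum>i<N. w $ i * cnj (w $ i))"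
      using wc by (simp add: scalar_prod_def lessThan_atLeast0)
    also have "\<dots> = (\<Sum>i<N. w $ i * (\<Sum>j<d. cnj (B $$ (i,j)) * cnj (v $ j)))"
      unfolding w_def using B v by (simp add: row_def scalar_prod_def lessThan_atLeast0)
    also have "\<dots> = (\<Sum>j<d. cnj (v $ j) * (\<Sum>i<N. cnj (B $$ (i,j)) * w $ i))"
      by (simp add: sum_distrib_left sum_distrib_right sum.swap[of _ "{..<N}"] mult_ac)
    also have "\<dots> = 0" using comp by simp
    finally have "w = 0\<^sub>v N" using conjugate_square_eq_0_vec[OF wc] by simp
    then show "v = 0\<^sub>v d" using inj_matD[OF inj B v] unfolding w_def by simp
  qed
  then obtain Mi where Mi: "Mi \<in> carrier_mat d d" "Mi * M = 1\<^sub>m d"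
    using inj_mat_square_inverse[OF Mc] by metis
  have "(Mi * adjoint_mat B) * B = Mi * M" unfolding M_def using Mi B by (simp add: assoc_mult_mat[of _ d d _ N _ d])
  then show ?thesis using that[of "Mi * adjoint_mat B"] Mi B adjoint_mat_carrier[OF B] by simp
qed

section \<open>Representations, intertwiners and Schur's lemma\<close>

definition intertwiner ::
  "('g,'b) monoid_scheme \<Rightarrow> nat \<Rightarrow> ('g \<Rightarrow> complex mat) \<Rightarrow> nat \<Rightarrow> ('g \<Rightarrow> complex mat) \<Rightarrow> complex mat \<Rightarrow> bool"
where
  "intertwiner \<Gamma> n \<rho> m \<sigma> A \<longleftrightarrow> A \<in> carrier_mat m n \<and> (\<forall>g\<in>carrier \<Gamma>. A * \<rho> g = \<sigma> g * A)"

definition invariant_subspace ::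
  "('g,'b) monoid_scheme \<Rightarrow> nat \<Rightarrow> ('g \<Rightarrow> complex mat) \<Rightarrow> complex vec set \<Rightarrow> bool"
where
  "invariant_subspace \<Gamma> n \<rho> W \<longleftrightarrow> is_subspace n W \<and> (\<forall>g\<in>carrier \<Gamma>. \<forall>w\<in>W. \<rho> g *\<^sub>v w \<in> W)"

lemma rep_carrier: "is_rep \<Gamma> n \<rho> \<Longrightarrow> g \<in> carrier \<Gamma> \<Longrightarrow> \<rho> g \<in> carrier_mat n n"
  and rep_mult: "is_rep \<Gamma> n \<rho> \<Longrightarrow> g \<in> carrier \<Gamma> \<Longrightarrow> h \<in> carrier \<Gamma> \<Longrightarrow> \<rho> (g \<otimes>\<^bsub>\<Gamma>\<^esub> h) = \<rho> g * \<rho> h"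
  and rep_one: "is_rep \<Gamma> n \<rho> \<Longrightarrow> \<rho> \<one>\<^bsub>\<Gamma>\<^esub> = 1\<^sub>m n"
  unfolding is_rep_def by auto

lemma rep_restrict: "is_rep G n \<rho> \<Longrightarrow> H \<subseteq> carrier G \<Longrightarrow> is_rep (G\<lparr>carrier := H\<rparr>) n \<rho>"
  unfolding is_rep_def by auto

lemma irrep_rep: "is_irrep \<Gamma> n \<rho> \<Longrightarrow> is_rep \<Gamma> n \<rho>"
  and irrep_pos: "is_irrep \<Gamma> n \<rho> \<Longrightarrow> n > 0"
  unfolding is_irrep_def by auto

lemma irrep_invariant_subspace_cases:
  "is_irrep \<Gamma> n \<rho> \<Longrightarrow> invariant_subspace \<Gamma> n \<rho> W \<Longrightarrow> W = {0\<^sub>v n} \<or> W = carrier_vec n"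
  unfolding is_irrep_def invariant_subspace_def by blast

lemma is_irrepI:
  assumes "is_rep \<Gamma> n \<rho>" "n > 0"
    and "\<And>W. invariant_subspace \<Gamma> n \<rho> W \<Longrightarrow> W \<noteq> {0\<^sub>v n} \<Longrightarrow> W \<noteq> carrier_vec n \<Longrightarrow> False"
  shows "is_irrep \<Gamma> n \<rho>"
  using assms unfolding is_irrep_def invariant_subspace_def by blast

lemma intertwiner_carrier: "intertwiner \<Gamma> n \<rho> m \<sigma> A \<Longrightarrow> A \<in> carrier_mat m n"
  and intertwiner_eq: "intertwiner \<Gamma> n \<rho> m \<sigma> A \<Longrightarrow> g \<in> carrier \<Gamma> \<Longrightarrow> A * \<rho> g = \<sigma> g * A"
  unfolding intertwiner_def by auto

lemma intertwinerI:
  "A \<in> carrier_mat m n \<Longrightarrow> (\<And>g. g \<in> carrier \<Gamma> \<Longrightarrow> A * \<rho> g = \<sigma> g * A) \<Longrightarrow> intertwiner \<Gamma> n \<rho> m \<sigma> A"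
  unfolding intertwiner_def by auto

lemma intertwiner_cong:
  assumes "\<And>g. g \<in> carrier \<Gamma> \<Longrightarrow> \<rho> g = \<rho>' g" "\<And>g. g \<in> carrier \<Gamma> \<Longrightarrow> \<sigma> g = \<sigma>' g"
  shows "intertwiner \<Gamma> n \<rho> m \<sigma> A = intertwiner \<Gamma> n \<rho>' m \<sigma>' A"
  unfolding intertwiner_def using assms by auto

lemma intertwiner_mult:
  assumes r: "is_rep \<Gamma> n \<rho>" and s: "is_rep \<Gamma> m \<sigma>" and t: "is_rep \<Gamma> l \<tau>"
    and A: "intertwiner \<Gamma> n \<rho> m \<sigma> A" and B: "intertwiner \<Gamma> m \<sigma> l \<tau> B"
  shows "intertwiner \<Gamma> n \<rho> l \<tau> (B * A)"
proof (rule intertwinerI)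
  have Ac: "A \<in> carrier_mat m n" and Bc: "B \<in> carrier_mat l m"
    using intertwiner_carrier[OF A] intertwiner_carrier[OF B] by auto
  then show "B * A \<in> carrier_mat l n" by simp
  fix g assume g: "g \<in> carrier \<Gamma>"
  note c = rep_carrier[OF r g] rep_carrier[OF s g] rep_carrier[OF t g]
  have "B * A * \<rho> g = B * (A * \<rho> g)" using Ac Bc c by simp
  also have "\<dots> = B * (\<sigma> g * A)" using intertwiner_eq[OF A g] by simp
  also have "\<dots> = (B * \<sigma> g) * A" using Ac Bc c by (simp add: assoc_mult_mat)
  also have "\<dots> = (\<tau> g * B) * A" using intertwiner_eq[OF B g] by simp
  also have "\<dots> = \<tau> g * (B * A)" using Ac Bc c by simp
  finally show "B * A * \<rho> g = \<tau> g * (B * A)" .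
qed

lemma intertwiner_inverse:
  assumes r: "is_rep \<Gamma> n \<rho>" and s: "is_rep \<Gamma> n \<sigma>" and P: "intertwiner \<Gamma> n \<rho> n \<sigma> P"
    and Q: "Q \<in> carrier_mat n n" and PQ: "P * Q = 1\<^sub>m n" and QP: "Q * P = 1\<^sub>m n"
  shows "intertwiner \<Gamma> n \<sigma> n \<rho> Q"
proof (rule intertwinerI[OF Q])
  fix g assume g: "g \<in> carrier \<Gamma>"
  have Pc: "P \<in> carrier_mat n n" using intertwiner_carrier[OF P] .
  note c = rep_carrier[OF r g] rep_carrier[OF s g]
  have "Q * \<sigma> g = Q * \<sigma> g * (P * Q)" using PQ Q c by simp
  also have "\<dots> = Q * (\<sigma> g * P) * Q" using Q c Pc by (simp add: assoc_mult_mat[of _ n n _ n _ n])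
  also have "\<dots> = Q * (P * \<rho> g) * Q" using intertwiner_eq[OF P g] by simp
  also have "\<dots> = (Q * P) * \<rho> g * Q" using Q c Pc by (simp add: assoc_mult_mat[of _ n n _ n _ n])
  also have "\<dots> = \<rho> g * Q" using QP c Q by simp
  finally show "Q * \<sigma> g = \<rho> g * Q" .
qed

lemma carrier_vec_invariant: "is_rep \<Gamma> n \<rho> \<Longrightarrow> invariant_subspace \<Gamma> n \<rho> (carrier_vec n)"
  unfolding invariant_subspace_def using carrier_vec_subspace rep_carrier by fastforce

lemma kernel_invariant:
  assumes r: "is_rep \<Gamma> n \<rho>" and s: "is_rep \<Gamma> m \<sigma>" and A: "intertwiner \<Gamma> n \<rho> m \<sigma> A"
  shows "invariant_subspace \<Gamma> n \<rho> {v\<in>carrier_vec n. A *\<^sub>v v = 0\<^sub>v m}"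
  unfolding invariant_subspace_def
proof (intro conjI ballI)
  have Ac: "A \<in> carrier_mat m n" using intertwiner_carrier[OF A] .
  show "is_subspace n {v \<in> carrier_vec n. A *\<^sub>v v = 0\<^sub>v m}" using kernel_subspace[OF Ac] .
  fix g w assume g: "g \<in> carrier \<Gamma>" and w: "w \<in> {v \<in> carrier_vec n. A *\<^sub>v v = 0\<^sub>v m}"
  note c = rep_carrier[OF r g] rep_carrier[OF s g]
  have "A *\<^sub>v (\<rho> g *\<^sub>v w) = (A * \<rho> g) *\<^sub>v w" using Ac c w by simp
  also have "\<dots> = \<sigma> g *\<^sub>v (A *\<^sub>v w)" using intertwiner_eq[OF A g] Ac c w by simp
  also have "\<dots> = 0\<^sub>v m" using w c by simp
  finally show "\<rho> g *\<^sub>v w \<in> {v \<in> carrier_vec n. A *\<^sub>v v = 0\<^sub>v m}" using c w by simp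
qed

lemma col_space_invariant:
  assumes r: "is_rep \<Gamma> n \<rho>" and s: "is_rep \<Gamma> m \<sigma>" and A: "intertwiner \<Gamma> n \<rho> m \<sigma> A"
  shows "invariant_subspace \<Gamma> m \<sigma> (col_space A)"
  unfolding invariant_subspace_def
proof (intro conjI ballI)
  have Ac: "A \<in> carrier_mat m n" using intertwiner_carrier[OF A] .
  show "is_subspace m (col_space A)" using col_space_subspace[OF Ac] .
  fix g w assume g: "g \<in> carrier \<Gamma>" and w: "w \<in> col_space A"
  then obtain v where v: "v \<in> carrier_vec n" "w = A *\<^sub>v v" unfolding col_space_def using Ac by auto
  note c = rep_carrier[OF r g] rep_carrier[OF s g]
  have "\<sigma> g *\<^sub>v w = (\<sigma> g * A) *\<^sub>v v" using v Ac c by simp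
  also have "\<dots> = (A * \<rho> g) *\<^sub>v v" using intertwiner_eq[OF A g] by simp
  also have "\<dots> = A *\<^sub>v (\<rho> g *\<^sub>v v)" using Ac c v by simp
  finally show "\<sigma> g *\<^sub>v w \<in> col_space A" unfolding col_space_def using Ac c v by auto
qed

lemma intertwiner_from_irrep_inj:
  assumes r: "is_irrep \<Gamma> n \<rho>" and s: "is_rep \<Gamma> m \<sigma>" and A: "intertwiner \<Gamma> n \<rho> m \<sigma> A"
    and nz: "A \<noteq> 0\<^sub>m m n"
  shows "inj_mat A"
proof -
  have Ac: "A \<in> carrier_mat m n" using intertwiner_carrier[OF A] .
  let ?K = "{v\<in>carrier_vec n. A *\<^sub>v v = 0\<^sub>v m}"
  have "invariant_subspace \<Gamma> n \<rho> ?K" using kernel_invariant[OF irrep_rep[OF r] s A] .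
  moreover obtain v where "v \<in> carrier_vec n" "A *\<^sub>v v \<noteq> 0\<^sub>v m"
    using mat_nonzero_imp_mult_vec_nonzero[OF Ac nz] .
  then have "?K \<noteq> carrier_vec n" by blast
  ultimately have "?K = {0\<^sub>v n}" using irrep_invariant_subspace_cases[OF r] by blast
  then show ?thesis using Ac by (intro inj_matI) auto
qed

lemma intertwiner_to_irrep_surj:
  assumes r: "is_rep \<Gamma> n \<rho>" and s: "is_irrep \<Gamma> m \<sigma>" and A: "intertwiner \<Gamma> n \<rho> m \<sigma> A"
    and nz: "A \<noteq> 0\<^sub>m m n"
  shows "col_space A = carrier_vec m"
proof -
  have Ac: "A \<in> carrier_mat m n" using intertwiner_carrier[OF A] .
  have "invariant_subspace \<Gamma> m \<sigma> (col_space A)" using col_space_invariant[OF r irrep_rep[OF s] A] .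
  moreover have "col_space A \<noteq> {0\<^sub>v m}"
  proof -
    obtain v where "v \<in> carrier_vec n" "A *\<^sub>v v \<noteq> 0\<^sub>v m" using mat_nonzero_imp_mult_vec_nonzero[OF Ac nz] .
    then show ?thesis using Ac unfolding col_space_def by auto
  qed
  ultimately show ?thesis using irrep_invariant_subspace_cases[OF s] by blast
qed

lemma intertwiner_to_irrep_dim_le:
  assumes "is_rep \<Gamma> n \<rho>" "is_irrep \<Gamma> m \<sigma>" "intertwiner \<Gamma> n \<rho> m \<sigma> A" "A \<noteq> 0\<^sub>m m n"
  shows "m \<le> n"
  using surj_mat_dim_le[OF intertwiner_carrier[OF assms(3)]] intertwiner_to_irrep_surj[OF assms] by simp

lemma schur_lemma:
  assumes r: "is_irrep \<Gamma> n \<rho>" and s: "is_irrep \<Gamma> m \<sigma>" and A: "intertwiner \<Gamma> n \<rho> m \<sigma> A"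
    and nz: "A \<noteq> 0\<^sub>m m n"
  shows "m = n" and "invertible_mat A"
proof -
  have Ac: "A \<in> carrier_mat m n" using intertwiner_carrier[OF A] .
  have i: "inj_mat A" using intertwiner_from_irrep_inj[OF r irrep_rep[OF s] A nz] .
  show mn: "m = n"
    using inj_mat_dim_le[OF Ac i] intertwiner_to_irrep_dim_le[OF irrep_rep[OF r] s A nz] by simp
  show "invertible_mat A" using inj_mat_square_invertible[of A n] Ac mn i by simp
qed

lemma proper_col_space_dim_less:
  assumes C: "C \<in> carrier_mat d d'" and inj: "inj_mat C" and proper: "col_space C \<noteq> carrier_vec d"
  shows "d' < d"
proof -
  have "d' \<noteq> d" using inj_mat_square_col_space[of C d] C inj proper by auto
  then show ?thesis using inj_mat_dim_le[OF C inj] by simp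
qed

text \<open>The restriction of \<open>\<pi>\<close> to \<open>W = col_space B\<close> is \<open>L \<pi> B\<close> for a left inverse \<open>L\<close> of \<open>B\<close>.\<close>

lemma subrep_of_invariant_subspace:
  assumes r: "is_rep \<Gamma> N \<pi>" and W: "invariant_subspace \<Gamma> N \<pi> W"
  obtains d \<sigma> B where "is_rep \<Gamma> d \<sigma>" "B \<in> carrier_mat N d" "inj_mat B" "col_space B = W"
    "intertwiner \<Gamma> d \<sigma> N \<pi> B"
proof -
  have "is_subspace N W" using W unfolding invariant_subspace_def by simp
  then obtain d B where B: "B \<in> carrier_mat N d" "inj_mat B" "col_space B = W"
    by (rule subspace_basis)
  obtain L where L: "L \<in> carrier_mat d N" "L * B = 1\<^sub>m d" using inj_mat_left_inverse[OF B(1,2)] .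
  define \<sigma> where "\<sigma> = (\<lambda>g. L * \<pi> g * B)"
  have key: "\<pi> g * B = B * \<sigma> g" if g: "g \<in> carrier \<Gamma>" for g
  proof (rule mat_eq_by_mult_vec[of _ N d])
    have pg: "\<pi> g \<in> carrier_mat N N" using rep_carrier[OF r g] .
    then show "\<pi> g * B \<in> carrier_mat N d" "B * \<sigma> g \<in> carrier_mat N d"
      unfolding \<sigma>_def using B L by simp_all
    fix v :: "complex vec" assume v: "v \<in> carrier_vec d"
    have "\<pi> g *\<^sub>v (B *\<^sub>v v) \<in> W" using W g B v unfolding invariant_subspace_def col_space_def by auto
    then obtain u where u: "u \<in> carrier_vec d" "\<pi> g *\<^sub>v (B *\<^sub>v v) = B *\<^sub>v u"
      using B unfolding col_space_def by auto
    have c1: "\<pi> g * B \<in> carrier_mat N d" and c2: "L * (\<pi> g * B) \<in> carrier_mat d d"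
      using pg B L by simp_all
    have "\<sigma> g = L * (\<pi> g * B)" unfolding \<sigma>_def using pg B L by simp
    then have "(B * \<sigma> g) *\<^sub>v v = B *\<^sub>v (L *\<^sub>v (\<pi> g *\<^sub>v (B *\<^sub>v v)))"
      using assoc_mult_mat_vec[OF B(1) c2 v] assoc_mult_mat_vec[OF L(1) c1 v]
        assoc_mult_mat_vec[OF pg B(1) v] by simp
    also have "\<dots> = B *\<^sub>v ((L * B) *\<^sub>v u)" using u L(1) B(1) by simp
    also have "\<dots> = (\<pi> g * B) *\<^sub>v v" using L u pg B v by simp
    finally show "(\<pi> g * B) *\<^sub>v v = (B * \<sigma> g) *\<^sub>v v" by simp
  qed
  have "is_rep \<Gamma> d \<sigma>" unfolding is_rep_def
  proof (intro conjI ballI)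
    fix g h assume g: "g \<in> carrier \<Gamma>" and h: "h \<in> carrier \<Gamma>"
    note c = rep_carrier[OF r g] rep_carrier[OF r h]
    have "\<sigma> (g \<otimes>\<^bsub>\<Gamma>\<^esub> h) = (L * \<pi> g) * (\<pi> h * B)" unfolding \<sigma>_def
      using rep_mult[OF r g h] L B c by (simp add: assoc_mult_mat[of _ d N _ N _ d])
    also have "\<dots> = (L * \<pi> g) * (B * \<sigma> h)" using key[OF h] by simp
    also have "\<dots> = \<sigma> g * \<sigma> h"
    proof -
      have "L * \<pi> g \<in> carrier_mat d N" "\<sigma> h \<in> carrier_mat d d" unfolding \<sigma>_def using L B c by simp_all
      then show ?thesis unfolding \<sigma>_def by (rule assoc_mult_mat[OF _ B(1), symmetric, unfolded \<sigma>_def])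
    qed
    finally show "\<sigma> (g \<otimes>\<^bsub>\<Gamma>\<^esub> h) = \<sigma> g * \<sigma> h" .
  qed (use L B rep_carrier[OF r] rep_one[OF r] in \<open>auto simp: \<sigma>_def\<close>)
  moreover have "intertwiner \<Gamma> d \<sigma> N \<pi> B" using B key by (intro intertwinerI) auto
  ultimately show ?thesis using that B by blast
qed

text \<open>An invariant subspace of minimal positive dimension inside \<open>W\<close> carries an irreducible
  subrepresentation.\<close>

lemma irreducible_subrep:
  assumes r: "is_rep \<Gamma> N \<pi>" and W: "invariant_subspace \<Gamma> N \<pi> W" and nz: "W \<noteq> {0\<^sub>v N}"
  obtains d \<sigma> B where "is_irrep \<Gamma> d \<sigma>" "B \<in> carrier_mat N d" "inj_mat B" "col_space B \<subseteq> W"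
    "intertwiner \<Gamma> d \<sigma> N \<pi> B"
proof -
  define D where "D = {d. d > 0 \<and> (\<exists>\<sigma> B. is_rep \<Gamma> d \<sigma> \<and> B \<in> carrier_mat N d \<and> inj_mat B \<and>
    col_space B \<subseteq> W \<and> intertwiner \<Gamma> d \<sigma> N \<pi> B)}"
  obtain d0 \<sigma>0 B0 where E0: "is_rep \<Gamma> d0 \<sigma>0" "B0 \<in> carrier_mat N d0" "inj_mat B0" "col_space B0 = W"
    "intertwiner \<Gamma> d0 \<sigma>0 N \<pi> B0"
    using subrep_of_invariant_subspace[OF r W] .
  have "d0 > 0" using E0(2,4) nz col_space_zero_cols by (cases d0) auto
  hence "d0 \<in> D" unfolding D_def using E0 by blast
  define d where "d = (LEAST d. d \<in> D)"
  have "d \<in> D" unfolding d_def using \<open>d0 \<in> D\<close> by (rule LeastI)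
  then obtain \<sigma> B where d: "d > 0" and E: "is_rep \<Gamma> d \<sigma>" "B \<in> carrier_mat N d" "inj_mat B"
    "col_space B \<subseteq> W" "intertwiner \<Gamma> d \<sigma> N \<pi> B"
    unfolding D_def by blast
  have "is_irrep \<Gamma> d \<sigma>"
  proof (rule is_irrepI[OF E(1) d])
    fix U assume U: "invariant_subspace \<Gamma> d \<sigma> U" "U \<noteq> {0\<^sub>v d}" "U \<noteq> carrier_vec d"
    obtain d' \<tau> C where C: "is_rep \<Gamma> d' \<tau>" "C \<in> carrier_mat d d'" "inj_mat C" "col_space C = U"
      "intertwiner \<Gamma> d' \<tau> d \<sigma> C"
      using subrep_of_invariant_subspace[OF E(1) U(1)] .
    have "d' > 0" using C(2,4) U(2) col_space_zero_cols by (cases d') auto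
    moreover have "d' < d" using proper_col_space_dim_less[OF C(2,3)] C(4) U(3) by simp
    moreover have "intertwiner \<Gamma> d' \<tau> N \<pi> (B * C)" using intertwiner_mult[OF C(1) E(1) r C(5) E(5)] .
    moreover have "inj_mat (B * C)" using inj_mat_mult[OF E(2) C(2) E(3) C(3)] .
    moreover have "col_space (B * C) \<subseteq> W" using col_space_mult_subset[OF E(2) C(2)] E(4) by blast
    moreover have "B * C \<in> carrier_mat N d'" using E(2) C(2) by simp
    ultimately have "d' \<in> D" unfolding D_def using C(1) by blast
    then have "d \<le> d'" unfolding d_def by (rule Least_le)
    with \<open>d' < d\<close> show False by simp
  qed
  then show ?thesis using that E by blast
qed

lemma rep_isoI:
  "intertwiner \<Gamma> n \<rho> n \<sigma> P \<Longrightarrow> invertible_mat P \<Longrightarrow> (\<rho>, \<sigma>) \<in> rep_iso \<Gamma> n"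
  unfolding rep_iso_def intertwiner_def by auto

lemma rep_isoE:
  assumes "(\<rho>, \<sigma>) \<in> rep_iso \<Gamma> n"
  obtains P where "intertwiner \<Gamma> n \<rho> n \<sigma> P" "invertible_mat P"
  using assms unfolding rep_iso_def intertwiner_def by auto

lemma rep_iso_refl: "is_rep \<Gamma> n \<rho> \<Longrightarrow> (\<rho>, \<rho>) \<in> rep_iso \<Gamma> n"
  by (rule rep_isoI[of _ _ _ _ "1\<^sub>m n"])
    (auto intro!: intertwinerI exI[of _ "1\<^sub>m n"] dest: rep_carrier simp: invertible_mat_def inverts_mat_def)

lemma rep_iso_sym:
  assumes iso: "(\<rho>, \<sigma>) \<in> rep_iso \<Gamma> n" and r: "is_rep \<Gamma> n \<rho>" and s: "is_rep \<Gamma> n \<sigma>"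
  shows "(\<sigma>, \<rho>) \<in> rep_iso \<Gamma> n"
proof -
  obtain P where P: "intertwiner \<Gamma> n \<rho> n \<sigma> P" "invertible_mat P" using iso by (rule rep_isoE)
  obtain Q where Q: "Q \<in> carrier_mat n n" "P * Q = 1\<^sub>m n" "Q * P = 1\<^sub>m n"
    using invertible_matE[OF intertwiner_carrier[OF P(1)] P(2)] .
  have "invertible_mat Q" using Q intertwiner_carrier[OF P(1)]
    unfolding invertible_mat_def inverts_mat_def by (auto intro!: exI[of _ P])
  then show ?thesis using rep_isoI intertwiner_inverse[OF r s P(1) Q] by blast
qed

text \<open>Classes of \<open>rep_iso\<close> may contain junk maps that are not representations, so
  the third map is not assumed to be one.\<close>

lemma rep_iso_trans:
  assumes "(\<rho>, \<sigma>) \<in> rep_iso \<Gamma> n" and "(\<sigma>, \<tau>) \<in> rep_iso \<Gamma> n"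
    and r: "is_rep \<Gamma> n \<rho>" and s: "is_rep \<Gamma> n \<sigma>"
  shows "(\<rho>, \<tau>) \<in> rep_iso \<Gamma> n"
proof -
  obtain P where P: "intertwiner \<Gamma> n \<rho> n \<sigma> P" "invertible_mat P" using assms(1) by (rule rep_isoE)
  obtain Q where Q: "intertwiner \<Gamma> n \<sigma> n \<tau> Q" "invertible_mat Q" using assms(2) by (rule rep_isoE)
  have Pc: "P \<in> carrier_mat n n" and Qc: "Q \<in> carrier_mat n n"
    using intertwiner_carrier[OF P(1)] intertwiner_carrier[OF Q(1)] .
  have "intertwiner \<Gamma> n \<rho> n \<tau> (Q * P)"
  proof (rule intertwinerI)
    show "Q * P \<in> carrier_mat n n" using Pc Qc by simp
    fix g assume g: "g \<in> carrier \<Gamma>"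
    note c = rep_carrier[OF r g] rep_carrier[OF s g]
    have "Q * P * \<rho> g = Q * (P * \<rho> g)" using Pc Qc c by simp
    also have "\<dots> = Q * (\<sigma> g * P)" using intertwiner_eq[OF P(1) g] by simp
    also have "\<dots> = (Q * \<sigma> g) * P" using Pc Qc c by simp
    also have "\<dots> = (\<tau> g * Q) * P" using intertwiner_eq[OF Q(1) g] by simp
    also have "\<dots> = \<tau> g * (Q * P)" using mult_assoc_square_right[OF Qc Pc] .
    finally show "Q * P * \<rho> g = \<tau> g * (Q * P)" .
  qed
  then show ?thesis using rep_isoI invertible_mat_mult[OF Pc P(2) Qc Q(2)] by blast
qed

lemma rep_iso_restrict: "(\<rho>, \<sigma>) \<in> rep_iso G n \<Longrightarrow> H \<subseteq> carrier G \<Longrightarrow> (\<rho>, \<sigma>) \<in> rep_iso (G\<lparr>carrier := H\<rparr>) n"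
  unfolding rep_iso_def by auto

definition has_nonzero_intertwiner ::
  "('g,'b) monoid_scheme \<Rightarrow> nat \<Rightarrow> ('g \<Rightarrow> complex mat) \<Rightarrow> nat \<Rightarrow> ('g \<Rightarrow> complex mat) \<Rightarrow> bool"
where
  "has_nonzero_intertwiner \<Gamma> n \<rho> m \<sigma> \<longleftrightarrow> (\<exists>A. intertwiner \<Gamma> n \<rho> m \<sigma> A \<and> A \<noteq> 0\<^sub>m m n)"

lemma has_nonzero_intertwiner_iso_right:
  assumes r: "is_rep \<Gamma> n \<rho>" and s: "is_rep \<Gamma> m \<sigma>" and s': "is_rep \<Gamma> m \<sigma>'"
    and iso: "(\<sigma>, \<sigma>') \<in> rep_iso \<Gamma> m" and A: "has_nonzero_intertwiner \<Gamma> n \<rho> m \<sigma>"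
  shows "has_nonzero_intertwiner \<Gamma> n \<rho> m \<sigma>'"
proof -
  obtain A where A: "intertwiner \<Gamma> n \<rho> m \<sigma> A" "A \<noteq> 0\<^sub>m m n"
    using assms(5) unfolding has_nonzero_intertwiner_def by blast
  obtain P where P: "intertwiner \<Gamma> m \<sigma> m \<sigma>' P" "invertible_mat P" using iso by (rule rep_isoE)
  have Pc: "P \<in> carrier_mat m m" using intertwiner_carrier[OF P(1)] .
  have "intertwiner \<Gamma> n \<rho> m \<sigma>' (P * A)" using intertwiner_mult[OF r s s' A(1) P(1)] .
  moreover have "P * A \<noteq> 0\<^sub>m m n"
    using inj_mat_mult_nonzero[OF Pc intertwiner_carrier[OF A(1)] invertible_imp_inj_mat[OF Pc P(2)] A(2)] .
  ultimately show ?thesis unfolding has_nonzero_intertwiner_def by blast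
qed

lemma has_nonzero_intertwiner_iso_left:
  assumes r: "is_rep \<Gamma> n \<rho>" and r': "is_rep \<Gamma> n \<rho>'" and s: "is_rep \<Gamma> m \<sigma>"
    and iso: "(\<rho>, \<rho>') \<in> rep_iso \<Gamma> n" and A: "has_nonzero_intertwiner \<Gamma> n \<rho> m \<sigma>"
  shows "has_nonzero_intertwiner \<Gamma> n \<rho>' m \<sigma>"
proof -
  obtain A where A: "intertwiner \<Gamma> n \<rho> m \<sigma> A" "A \<noteq> 0\<^sub>m m n"
    using assms(5) unfolding has_nonzero_intertwiner_def by blast
  obtain P where P: "intertwiner \<Gamma> n \<rho> n \<rho>' P" "invertible_mat P" using iso by (rule rep_isoE)
  have Pc: "P \<in> carrier_mat n n" using intertwiner_carrier[OF P(1)] .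
  obtain Q where Q: "Q \<in> carrier_mat n n" "P * Q = 1\<^sub>m n" "Q * P = 1\<^sub>m n"
    using invertible_matE[OF Pc P(2)] .
  have "invertible_mat Q" using Q Pc unfolding invertible_mat_def inverts_mat_def by auto
  have "intertwiner \<Gamma> n \<rho>' m \<sigma> (A * Q)"
    using intertwiner_mult[OF r' r s intertwiner_inverse[OF r r' P(1) Q] A(1)] .
  moreover have "A * Q \<noteq> 0\<^sub>m m n"
    using mult_invertible_nonzero[OF intertwiner_carrier[OF A(1)] Q(1) \<open>invertible_mat Q\<close> A(2)] .
  ultimately show ?thesis unfolding has_nonzero_intertwiner_def by blast
qed

definition dual :: "('g,'b) monoid_scheme \<Rightarrow> ('g \<Rightarrow> complex mat) \<Rightarrow> 'g \<Rightarrow> complex mat" where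
  "dual \<Gamma> \<rho> g = transpose_mat (\<rho> (inv\<^bsub>\<Gamma>\<^esub> g))"

lemma is_rep_dual:
  assumes G: "group \<Gamma>" and r: "is_rep \<Gamma> n \<rho>"
  shows "is_rep \<Gamma> n (dual \<Gamma> \<rho>)"
  unfolding is_rep_def
proof (intro conjI ballI)
  fix g h assume g: "g \<in> carrier \<Gamma>" and h: "h \<in> carrier \<Gamma>"
  have ig: "inv\<^bsub>\<Gamma>\<^esub> g \<in> carrier \<Gamma>" and ih: "inv\<^bsub>\<Gamma>\<^esub> h \<in> carrier \<Gamma>"
    using group.inv_closed[OF G] g h by auto
  have "dual \<Gamma> \<rho> (g \<otimes>\<^bsub>\<Gamma>\<^esub> h) = transpose_mat (\<rho> (inv\<^bsub>\<Gamma>\<^esub> h) * \<rho> (inv\<^bsub>\<Gamma>\<^esub> g))"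
    unfolding dual_def using group.inv_mult_group[OF G g h] rep_mult[OF r ih ig] by simp
  also have "\<dots> = dual \<Gamma> \<rho> g * dual \<Gamma> \<rho> h" unfolding dual_def
    using transpose_mult[OF rep_carrier[OF r ih] rep_carrier[OF r ig]] by simp
  finally show "dual \<Gamma> \<rho> (g \<otimes>\<^bsub>\<Gamma>\<^esub> h) = dual \<Gamma> \<rho> g * dual \<Gamma> \<rho> h" .
next
  show "dual \<Gamma> \<rho> \<one>\<^bsub>\<Gamma>\<^esub> = 1\<^sub>m n"
    unfolding dual_def using rep_one[OF r] monoid.inv_one[OF group.is_monoid[OF G]] by simp
qed (use G r in \<open>auto simp: dual_def rep_carrier\<close>)

lemma dual_dual: "group \<Gamma> \<Longrightarrow> g \<in> carrier \<Gamma> \<Longrightarrow> dual \<Gamma> (dual \<Gamma> \<rho>) g = \<rho> g"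
  unfolding dual_def by (simp add: group.inv_inv)

lemma intertwiner_dual:
  assumes G: "group \<Gamma>" and r: "is_rep \<Gamma> n \<rho>" and s: "is_rep \<Gamma> m \<sigma>"
    and A: "intertwiner \<Gamma> n \<rho> m \<sigma> A"
  shows "intertwiner \<Gamma> m (dual \<Gamma> \<sigma>) n (dual \<Gamma> \<rho>) (transpose_mat A)"
proof (rule intertwinerI)
  have Ac: "A \<in> carrier_mat m n" using intertwiner_carrier[OF A] .
  then show "transpose_mat A \<in> carrier_mat n m" by simp
  fix g assume g: "g \<in> carrier \<Gamma>"
  have ig: "inv\<^bsub>\<Gamma>\<^esub> g \<in> carrier \<Gamma>" using group.inv_closed[OF G g] .
  have "transpose_mat A * dual \<Gamma> \<sigma> g = transpose_mat (\<sigma> (inv\<^bsub>\<Gamma>\<^esub> g) * A)"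
    unfolding dual_def using transpose_mult[OF rep_carrier[OF s ig] Ac] by simp
  also have "\<dots> = transpose_mat (A * \<rho> (inv\<^bsub>\<Gamma>\<^esub> g))" using intertwiner_eq[OF A ig] by simp
  also have "\<dots> = dual \<Gamma> \<rho> g * transpose_mat A"
    unfolding dual_def using transpose_mult[OF Ac rep_carrier[OF r ig]] by simp
  finally show "transpose_mat A * dual \<Gamma> \<sigma> g = dual \<Gamma> \<rho> g * transpose_mat A" .
qed

lemma intertwiner_to_dual:
  assumes G: "group \<Gamma>" and r: "is_rep \<Gamma> n \<rho>" and s: "is_rep \<Gamma> m \<sigma>"
    and A: "intertwiner \<Gamma> n \<rho> m (dual \<Gamma> \<sigma>) A"
  shows "intertwiner \<Gamma> m \<sigma> n (dual \<Gamma> \<rho>) (transpose_mat A)"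
  using intertwiner_dual[OF G r is_rep_dual[OF G s] A]
    intertwiner_cong[of \<Gamma> "dual \<Gamma> (dual \<Gamma> \<sigma>)" \<sigma> "dual \<Gamma> \<rho>" "dual \<Gamma> \<rho>"] dual_dual[OF G]
  by simp

lemma intertwiner_undual:
  assumes G: "group \<Gamma>" and r: "is_rep \<Gamma> n \<rho>" and s: "is_rep \<Gamma> m \<sigma>"
    and X: "intertwiner \<Gamma> n (dual \<Gamma> \<rho>) m (dual \<Gamma> \<sigma>) X"
  shows "intertwiner \<Gamma> m \<sigma> n \<rho> (transpose_mat X)"
  using intertwiner_dual[OF G is_rep_dual[OF G r] is_rep_dual[OF G s] X]
    intertwiner_cong[of \<Gamma> "dual \<Gamma> (dual \<Gamma> \<sigma>)" \<sigma> "dual \<Gamma> (dual \<Gamma> \<rho>)" \<rho>] dual_dual[OF G]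
  by simp

lemma transpose_mat_eq_zero_iff:
  "(A :: complex mat) \<in> carrier_mat m n \<Longrightarrow> transpose_mat A = 0\<^sub>m n m \<longleftrightarrow> A = 0\<^sub>m m n"
proof
  assume "transpose_mat A = 0\<^sub>m n m"
  then have "transpose_mat (transpose_mat A) = 0\<^sub>m m n" by simp
  then show "A = 0\<^sub>m m n" by simp
qed simp

text \<open>A proper subrepresentation \<open>B : \<tau> \<rightarrow> \<rho>\<^sup>*\<close> would give a nonzero, hence injective,
  map \<open>B\<^sup>T : \<rho> \<rightarrow> \<tau>\<^sup>*\<close> into a space of smaller dimension.\<close>

lemma is_irrep_dual:
  assumes G: "group \<Gamma>" and r: "is_irrep \<Gamma> n \<rho>"
  shows "is_irrep \<Gamma> n (dual \<Gamma> \<rho>)"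
proof (rule is_irrepI)
  show dr: "is_rep \<Gamma> n (dual \<Gamma> \<rho>)" using is_rep_dual[OF G irrep_rep[OF r]] .
  show "n > 0" using irrep_pos[OF r] .
  fix U assume U: "invariant_subspace \<Gamma> n (dual \<Gamma> \<rho>) U" "U \<noteq> {0\<^sub>v n}" "U \<noteq> carrier_vec n"
  obtain d \<tau> B where B: "is_rep \<Gamma> d \<tau>" "B \<in> carrier_mat n d" "inj_mat B" "col_space B = U"
    "intertwiner \<Gamma> d \<tau> n (dual \<Gamma> \<rho>) B"
    using subrep_of_invariant_subspace[OF dr U(1)] .
  have "d > 0" using B(2,4) U(2) col_space_zero_cols by (cases d) auto
  have dn: "d < n" using proper_col_space_dim_less[OF B(2,3)] B(4) U(3) by simp
  have BT: "intertwiner \<Gamma> n \<rho> d (dual \<Gamma> \<tau>) (transpose_mat B)"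
    using intertwiner_to_dual[OF G B(1) irrep_rep[OF r] B(5)] .
  have "transpose_mat B \<noteq> 0\<^sub>m d n"
    using inj_mat_nonzero[OF B(2,3) \<open>d > 0\<close>] transpose_mat_eq_zero_iff[OF B(2)] by simp
  then have "inj_mat (transpose_mat B)"
    using intertwiner_from_irrep_inj[OF r is_rep_dual[OF G B(1)] BT] by simp
  then have "n \<le> d" using inj_mat_dim_le[of "transpose_mat B" d n] B(2) by simp
  with dn show False by simp
qed

section \<open>Isomorphism classes of irreducible representations\<close>

definition ecard :: "'a set \<Rightarrow> enat" where
  "ecard A = (if finite A then enat (card A) else \<infinity>)"

lemma ecard_image: "inj_on f A \<Longrightarrow> ecard (f ` A) = ecard A"
  unfolding ecard_def by (simp add: finite_image_iff card_image)

lemma ecard_Un_disjoint: "A \<inter> B = {} \<Longrightarrow> ecard (A \<union> B) = ecard A + ecard B"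
  unfolding ecard_def by (auto simp: card_Un_disjoint)

lemma ecard_Sigma: "finite I \<Longrightarrow> ecard (Sigma I A) = (\<Sum>i\<in>I. ecard (A i))"
proof (induction I rule: finite_induct)
  case empty then show ?case by (simp add: ecard_def zero_enat_def)
next
  case (insert x I)
  have "Sigma (insert x I) A = (Pair x ` A x) \<union> Sigma I A" by auto
  moreover have "(Pair x ` A x) \<inter> Sigma I A = {}" using insert.hyps by auto
  ultimately have "ecard (Sigma (insert x I) A) = ecard (Pair x ` A x) + ecard (Sigma I A)"
    by (simp add: ecard_Un_disjoint)
  also have "ecard (Pair x ` A x) = ecard (A x)" by (rule ecard_image) (auto simp: inj_on_def)
  finally show ?case using insert by simp
qed

lemma ecard_le_mult_if_relation_fibres_bounded:
  assumes ex: "\<And>x. x \<in> A \<Longrightarrow> \<exists>y\<in>B. R x y"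
    and fib: "\<And>y. y \<in> B \<Longrightarrow> finite {x\<in>A. R x y} \<and> card {x\<in>A. R x y} \<le> k"
  shows "ecard A \<le> enat k * ecard B"
proof (cases "finite B")
  case True
  have sub: "A \<subseteq> (\<Union>y\<in>B. {x\<in>A. R x y})" using ex by blast
  have finU: "finite (\<Union>y\<in>B. {x\<in>A. R x y})" using True fib by simp
  have "card A \<le> card (\<Union>y\<in>B. {x\<in>A. R x y})" by (rule card_mono[OF finU sub])
  also have "\<dots> \<le> (\<Sum>y\<in>B. card {x\<in>A. R x y})" by (rule card_UN_le[OF True])
  also have "\<dots> \<le> (\<Sum>y\<in>B. k)" using fib by (intro sum_mono) simp
  finally show ?thesis using True finite_subset[OF sub finU] unfolding ecard_def by (simp add: mult.commute)
next
  case False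
  show ?thesis
  proof (cases "A = {}")
    case True
    then show ?thesis unfolding ecard_def by (simp add: zero_enat_def)
  next
    case False
    then obtain x y where "x \<in> A" "y \<in> B" "R x y" using ex by blast
    then have "{x\<in>A. R x y} \<noteq> {}" by blast
    then have "k > 0" using fib[OF \<open>y \<in> B\<close>] by (metis card_0_eq le_zero_eq not_gr_zero)
    then show ?thesis using \<open>infinite B\<close> unfolding ecard_def by simp
  qed
qed

definition irrep_classes :: "('g,'b) monoid_scheme \<Rightarrow> nat \<Rightarrow> ('g \<Rightarrow> complex mat) set set" where
  "irrep_classes \<Gamma> n = {\<rho>. is_irrep \<Gamma> n \<rho>} // rep_iso \<Gamma> n"

definition irrep_classes_upto :: "('g,'b) monoid_scheme \<Rightarrow> nat \<Rightarrow> (nat \<times> ('g \<Rightarrow> complex mat) set) set" where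
  "irrep_classes_upto \<Gamma> N = Sigma {1..N} (irrep_classes \<Gamma>)"

definition class_rep :: "('g,'b) monoid_scheme \<Rightarrow> nat \<times> ('g \<Rightarrow> complex mat) set \<Rightarrow> 'g \<Rightarrow> complex mat" where
  "class_rep \<Gamma> x = (SOME \<rho>. \<rho> \<in> snd x \<and> is_irrep \<Gamma> (fst x) \<rho>)"

lemma R_irr_eq_ecard: "R_irr \<Gamma> N = ecard (irrep_classes_upto \<Gamma> N)"
proof -
  have "r_irr \<Gamma> n = ecard (irrep_classes \<Gamma> n)" for n
    unfolding r_irr_def irrep_classes_def ecard_def Let_def ..
  then show ?thesis unfolding R_irr_def irrep_classes_upto_def by (simp add: ecard_Sigma)
qed

lemma irrep_classesE:
  assumes "c \<in> irrep_classes \<Gamma> n"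
  obtains \<rho> where "is_irrep \<Gamma> n \<rho>" "c = rep_iso \<Gamma> n `` {\<rho>}"
  using assms unfolding irrep_classes_def by (auto elim: quotientE)

lemma class_of_irrep: "is_irrep \<Gamma> n \<rho> \<Longrightarrow> rep_iso \<Gamma> n `` {\<rho>} \<in> irrep_classes \<Gamma> n"
  unfolding irrep_classes_def by (rule quotientI) simp

lemma class_rep:
  assumes "x \<in> irrep_classes_upto \<Gamma> N"
  shows "is_irrep \<Gamma> (fst x) (class_rep \<Gamma> x)" and "class_rep \<Gamma> x \<in> snd x"
proof -
  obtain \<rho> where \<rho>: "is_irrep \<Gamma> (fst x) \<rho>" "snd x = rep_iso \<Gamma> (fst x) `` {\<rho>}"
    using assms unfolding irrep_classes_upto_def by (auto elim: irrep_classesE)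
  then have "\<rho> \<in> snd x \<and> is_irrep \<Gamma> (fst x) \<rho>" using rep_iso_refl[OF irrep_rep] by auto
  then have "class_rep \<Gamma> x \<in> snd x \<and> is_irrep \<Gamma> (fst x) (class_rep \<Gamma> x)"
    unfolding class_rep_def by (rule someI[where P = "\<lambda>\<rho>. \<rho> \<in> snd x \<and> is_irrep \<Gamma> (fst x) \<rho>"])
  then show "is_irrep \<Gamma> (fst x) (class_rep \<Gamma> x)" and "class_rep \<Gamma> x \<in> snd x" by auto
qed

lemma class_of_irrep_upto:
  assumes \<sigma>: "is_irrep \<Gamma> d \<sigma>" and "d \<le> N"
  shows "(d, rep_iso \<Gamma> d `` {\<sigma>}) \<in> irrep_classes_upto \<Gamma> N"
    and "(\<sigma>, class_rep \<Gamma> (d, rep_iso \<Gamma> d `` {\<sigma>})) \<in> rep_iso \<Gamma> d"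
proof -
  show x: "(d, rep_iso \<Gamma> d `` {\<sigma>}) \<in> irrep_classes_upto \<Gamma> N"
    unfolding irrep_classes_upto_def using irrep_pos[OF \<sigma>] assms(2) class_of_irrep[OF \<sigma>] by auto
  show "(\<sigma>, class_rep \<Gamma> (d, rep_iso \<Gamma> d `` {\<sigma>})) \<in> rep_iso \<Gamma> d"
    using class_rep(2)[OF x] by simp
qed

lemma class_rep_eq_if_iso:
  assumes x: "x \<in> irrep_classes_upto \<Gamma> N" and y: "y \<in> irrep_classes_upto \<Gamma> N"
    and dim: "fst x = fst y" and iso: "(class_rep \<Gamma> x, class_rep \<Gamma> y) \<in> rep_iso \<Gamma> (fst x)"
  shows "x = y"
proof -
  let ?n = "fst x"
  obtain \<rho> where \<rho>: "is_irrep \<Gamma> ?n \<rho>" "snd x = rep_iso \<Gamma> ?n `` {\<rho>}"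
    using x unfolding irrep_classes_upto_def by (auto elim: irrep_classesE)
  obtain \<sigma> where \<sigma>: "is_irrep \<Gamma> ?n \<sigma>" "snd y = rep_iso \<Gamma> ?n `` {\<sigma>}"
    using y dim unfolding irrep_classes_upto_def by (auto elim: irrep_classesE)
  have reps: "is_rep \<Gamma> ?n \<rho>" "is_rep \<Gamma> ?n \<sigma>" "is_rep \<Gamma> ?n (class_rep \<Gamma> x)" "is_rep \<Gamma> ?n (class_rep \<Gamma> y)"
    using \<rho> \<sigma> class_rep(1)[OF x] class_rep(1)[OF y] dim irrep_rep by auto
  have x\<rho>: "(\<rho>, class_rep \<Gamma> x) \<in> rep_iso \<Gamma> ?n" and y\<sigma>: "(\<sigma>, class_rep \<Gamma> y) \<in> rep_iso \<Gamma> ?n"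
    using class_rep(2)[OF x] class_rep(2)[OF y] \<rho>(2) \<sigma>(2) by auto
  have "(\<rho>, class_rep \<Gamma> y) \<in> rep_iso \<Gamma> ?n" using rep_iso_trans[OF x\<rho> iso reps(1,3)] .
  then have \<rho>\<sigma>: "(\<rho>, \<sigma>) \<in> rep_iso \<Gamma> ?n"
    using rep_iso_trans[OF _ rep_iso_sym[OF y\<sigma> reps(2,4)] reps(1,4)] by blast
  have \<sigma>\<rho>: "(\<sigma>, \<rho>) \<in> rep_iso \<Gamma> ?n" using rep_iso_sym[OF \<rho>\<sigma> reps(1,2)] .
  have "rep_iso \<Gamma> ?n `` {\<rho>} = rep_iso \<Gamma> ?n `` {\<sigma>}"
  proof (intro equalityI subsetI)
    fix \<tau> assume "\<tau> \<in> rep_iso \<Gamma> ?n `` {\<rho>}"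
    then show "\<tau> \<in> rep_iso \<Gamma> ?n `` {\<sigma>}" using rep_iso_trans[OF \<sigma>\<rho> _ reps(2,1)] by blast
  next
    fix \<tau> assume "\<tau> \<in> rep_iso \<Gamma> ?n `` {\<sigma>}"
    then show "\<tau> \<in> rep_iso \<Gamma> ?n `` {\<rho>}" using rep_iso_trans[OF \<rho>\<sigma> _ reps(1,2)] by blast
  qed
  then show ?thesis using \<rho>(2) \<sigma>(2) dim by (simp add: prod_eq_iff)
qed

lemma no_nonzero_intertwiner_between_classes:
  assumes x: "x \<in> irrep_classes_upto \<Gamma> N" and y: "y \<in> irrep_classes_upto \<Gamma> N" and "x \<noteq> y"
  shows "\<not> has_nonzero_intertwiner \<Gamma> (fst x) (class_rep \<Gamma> x) (fst y) (class_rep \<Gamma> y)"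
  unfolding has_nonzero_intertwiner_def
proof (intro notI, elim exE conjE)
  fix X assume X: "intertwiner \<Gamma> (fst x) (class_rep \<Gamma> x) (fst y) (class_rep \<Gamma> y) X"
    and nz: "X \<noteq> 0\<^sub>m (fst y) (fst x)"
  note schur = schur_lemma[OF class_rep(1)[OF x] class_rep(1)[OF y] X nz]
  then have "(class_rep \<Gamma> x, class_rep \<Gamma> y) \<in> rep_iso \<Gamma> (fst x)"
    using X by (intro rep_isoI) simp_all
  then have "x = y" using class_rep_eq_if_iso[OF x y] schur(1) by simp
  with \<open>x \<noteq> y\<close> show False ..
qed

lemma no_nonzero_intertwiner_between_dual_classes:
  assumes G: "group \<Gamma>" and x: "x \<in> irrep_classes_upto \<Gamma> N" and y: "y \<in> irrep_classes_upto \<Gamma> N"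
    and "x \<noteq> y"
  shows "\<not> has_nonzero_intertwiner \<Gamma> (fst x) (dual \<Gamma> (class_rep \<Gamma> x)) (fst y) (dual \<Gamma> (class_rep \<Gamma> y))"
  unfolding has_nonzero_intertwiner_def
proof (intro notI, elim exE conjE)
  fix X assume X: "intertwiner \<Gamma> (fst x) (dual \<Gamma> (class_rep \<Gamma> x)) (fst y) (dual \<Gamma> (class_rep \<Gamma> y)) X"
    and nz: "X \<noteq> 0\<^sub>m (fst y) (fst x)"
  have "intertwiner \<Gamma> (fst y) (class_rep \<Gamma> y) (fst x) (class_rep \<Gamma> x) (transpose_mat X)"
    using intertwiner_undual[OF G irrep_rep[OF class_rep(1)[OF x]] irrep_rep[OF class_rep(1)[OF y]] X] .
  moreover have "transpose_mat X \<noteq> 0\<^sub>m (fst x) (fst y)"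
    using transpose_mat_eq_zero_iff[OF intertwiner_carrier[OF X]] nz by simp
  ultimately show False
    using no_nonzero_intertwiner_between_classes[OF y x] \<open>x \<noteq> y\<close> unfolding has_nonzero_intertwiner_def by blast
qed

section \<open>Direct sums\<close>

lemma sum_atLeast0_lessThan_add_split:
  "(\<Sum>k\<in>{0..<a+b}. f k) = (\<Sum>k\<in>{0..<a}. f k) + (\<Sum>k\<in>{0..<b}. f (a+k :: nat))"
proof -
  have "(\<Sum>k\<in>{0..<a+b}. f k) = (\<Sum>k\<in>{0..<a}. f k) + (\<Sum>k\<in>{a..<a+b}. f k)"
    by (rule sum.atLeastLessThan_concat[symmetric]) auto
  also have "(\<Sum>k\<in>{a..<a+b}. f k) = (\<Sum>k\<in>{0..<b}. f (a+k))"
    using sum.shift_bounds_nat_ivl[of f 0 a b] by (simp add: add.commute)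
  finally show ?thesis .
qed

definition hcat :: "complex mat \<Rightarrow> complex mat \<Rightarrow> complex mat" where
  "hcat A B = mat (dim_row A) (dim_col A + dim_col B)
     (\<lambda>(i,j). if j < dim_col A then A $$ (i,j) else B $$ (i, j - dim_col A))"

definition top_rows :: "complex mat \<Rightarrow> nat \<Rightarrow> complex mat" where
  "top_rows C a = mat a (dim_col C) (\<lambda>(i,j). C $$ (i,j))"

definition bottom_rows :: "complex mat \<Rightarrow> nat \<Rightarrow> complex mat" where
  "bottom_rows C a = mat (dim_row C - a) (dim_col C) (\<lambda>(i,j). C $$ (a + i,j))"

definition block_diag :: "complex mat \<Rightarrow> complex mat \<Rightarrow> complex mat" where
  "block_diag P Q = four_block_mat P (0\<^sub>m (dim_row P) (dim_col Q)) (0\<^sub>m (dim_row Q) (dim_col P)) Q"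

lemma hcat_carrier: "A \<in> carrier_mat N a \<Longrightarrow> B \<in> carrier_mat N b \<Longrightarrow> hcat A B \<in> carrier_mat N (a + b)"
  and top_rows_carrier: "C \<in> carrier_mat (a + b) e \<Longrightarrow> top_rows C a \<in> carrier_mat a e"
  and bottom_rows_carrier: "C \<in> carrier_mat (a + b) e \<Longrightarrow> bottom_rows C a \<in> carrier_mat b e"
  and block_diag_carrier:
    "P \<in> carrier_mat a a \<Longrightarrow> Q \<in> carrier_mat b b \<Longrightarrow> block_diag P Q \<in> carrier_mat (a + b) (a + b)"
  unfolding hcat_def top_rows_def bottom_rows_def block_diag_def by auto

lemma hcat_mult:
  assumes A: "A \<in> carrier_mat N a" and B: "B \<in> carrier_mat N b" and C: "C \<in> carrier_mat (a + b) e"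
  shows "hcat A B * C = A * top_rows C a + B * bottom_rows C a"
  by (rule eq_matI) (use A B C in \<open>auto simp: hcat_def top_rows_def bottom_rows_def
      row_def col_def scalar_prod_def sum_atLeast0_lessThan_add_split\<close>)

lemma mult_hcat:
  assumes M: "M \<in> carrier_mat N N" and A: "A \<in> carrier_mat N a" and B: "B \<in> carrier_mat N b"
  shows "M * hcat A B = hcat (M * A) (M * B)"
  by (rule eq_matI) (use M A B in \<open>auto simp: hcat_def row_def col_def scalar_prod_def\<close>)

lemma top_rows_mult:
  "C \<in> carrier_mat (a + b) e \<Longrightarrow> T \<in> carrier_mat e f \<Longrightarrow> top_rows (C * T) a = top_rows C a * T"
  by (rule eq_matI) (auto simp: top_rows_def row_def col_def scalar_prod_def)

lemma bottom_rows_mult: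
  "C \<in> carrier_mat (a + b) e \<Longrightarrow> T \<in> carrier_mat e f \<Longrightarrow> bottom_rows (C * T) a = bottom_rows C a * T"
  by (rule eq_matI) (auto simp: bottom_rows_def row_def col_def scalar_prod_def)

lemma block_diag_mult:
  assumes "P \<in> carrier_mat a a" "Q \<in> carrier_mat b b" "P' \<in> carrier_mat a a" "Q' \<in> carrier_mat b b"
  shows "block_diag P Q * block_diag P' Q' = block_diag (P * P') (Q * Q')"
  using assms unfolding block_diag_def by (subst mult_four_block_mat) auto

lemma block_diag_one: "block_diag (1\<^sub>m a) (1\<^sub>m b) = 1\<^sub>m (a + b)"
  unfolding block_diag_def by simp

lemma top_rows_block_diag_mult:
  assumes P: "P \<in> carrier_mat a a" and Q: "Q \<in> carrier_mat b b" and C: "C \<in> carrier_mat (a + b) e"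
  shows "top_rows (block_diag P Q * C) a = P * top_rows C a"
  by (rule eq_matI) (use P Q C in \<open>auto simp: block_diag_def top_rows_def
      row_def col_def scalar_prod_def sum_atLeast0_lessThan_add_split\<close>)

lemma bottom_rows_block_diag_mult:
  assumes P: "P \<in> carrier_mat a a" and Q: "Q \<in> carrier_mat b b" and C: "C \<in> carrier_mat (a + b) e"
  shows "bottom_rows (block_diag P Q * C) a = Q * bottom_rows C a"
  by (rule eq_matI) (use P Q C in \<open>auto simp: block_diag_def bottom_rows_def
      row_def col_def scalar_prod_def sum_atLeast0_lessThan_add_split\<close>)

lemma hcat_mult_block_diag:
  assumes A: "A \<in> carrier_mat N a" and B: "B \<in> carrier_mat N b"
    and P: "P \<in> carrier_mat a a" and Q: "Q \<in> carrier_mat b b"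
  shows "hcat A B * block_diag P Q = hcat (A * P) (B * Q)"
  by (rule eq_matI) (use A B P Q in \<open>auto simp: hcat_def block_diag_def
      row_def col_def scalar_prod_def sum_atLeast0_lessThan_add_split\<close>)

lemma eq_zero_if_top_bottom_rows_zero:
  assumes C: "C \<in> carrier_mat (a + b) e"
    and "top_rows C a = 0\<^sub>m a e" and "bottom_rows C a = 0\<^sub>m b e"
  shows "C = 0\<^sub>m (a + b) e"
proof (rule eq_matI)
  fix i j assume i: "i < dim_row (0\<^sub>m (a + b) e :: complex mat)" and j: "j < dim_col (0\<^sub>m (a + b) e :: complex mat)"
  show "C $$ (i, j) = 0\<^sub>m (a + b) e $$ (i, j)"
  proof (cases "i < a")
    case True
    then have "top_rows C a $$ (i, j) = 0" using assms(2) j by simp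
    then show ?thesis using True C i j unfolding top_rows_def by simp
  next
    case False
    then have "bottom_rows C a $$ (i - a, j) = 0" using assms(3) i j by simp
    then show ?thesis using False C i j unfolding bottom_rows_def by simp
  qed
qed (use C in auto)

lemma hcat_mult_eq_zero_imp_blocks_nonzero:
  assumes A: "A \<in> carrier_mat M a" "inj_mat A" and B: "B \<in> carrier_mat M b" "inj_mat B"
    and C: "C \<in> carrier_mat (a + b) e" "C \<noteq> 0\<^sub>m (a + b) e" and zero: "hcat A B * C = 0\<^sub>m M e"
  shows "top_rows C a \<noteq> 0\<^sub>m a e" and "bottom_rows C a \<noteq> 0\<^sub>m b e"
proof -
  define C1 where "C1 = top_rows C a"
  define C2 where "C2 = bottom_rows C a"
  have C1c: "C1 \<in> carrier_mat a e" and C2c: "C2 \<in> carrier_mat b e"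
    unfolding C1_def C2_def using top_rows_carrier[OF C(1)] bottom_rows_carrier[OF C(1)] .
  have sum0: "A * C1 + B * C2 = 0\<^sub>m M e"
    using zero hcat_mult[OF A(1) B(1) C(1)] unfolding C1_def C2_def by simp
  have C12: "C1 \<noteq> 0\<^sub>m a e \<or> C2 \<noteq> 0\<^sub>m b e"
    using eq_zero_if_top_bottom_rows_zero[OF C(1)] C(2) unfolding C1_def C2_def by blast
  show C1_nz: "top_rows C a \<noteq> 0\<^sub>m a e"
  proof
    assume "top_rows C a = 0\<^sub>m a e"
    then have "C1 = 0\<^sub>m a e" unfolding C1_def .
    moreover have "B * C2 \<in> carrier_mat M e" using B(1) C2c by simp
    ultimately have "B * C2 = 0\<^sub>m M e" using sum0 A(1) by simp
    moreover have "C2 \<noteq> 0\<^sub>m b e" using C12 \<open>C1 = 0\<^sub>m a e\<close> by simp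
    ultimately show False using inj_mat_mult_nonzero[OF B(1) C2c B(2)] by simp
  qed
  show "bottom_rows C a \<noteq> 0\<^sub>m b e"
  proof
    assume "bottom_rows C a = 0\<^sub>m b e"
    then have "C2 = 0\<^sub>m b e" unfolding C2_def .
    moreover have "A * C1 \<in> carrier_mat M e" using A(1) C1c by simp
    ultimately have "A * C1 = 0\<^sub>m M e" using sum0 B(1) by simp
    then show False using inj_mat_mult_nonzero[OF A(1) C1c A(2)] C1_nz unfolding C1_def by simp
  qed
qed

definition direct_sum :: "('g \<Rightarrow> complex mat) \<Rightarrow> ('g \<Rightarrow> complex mat) \<Rightarrow> 'g \<Rightarrow> complex mat" where
  "direct_sum \<rho> \<sigma> g = block_diag (\<rho> g) (\<sigma> g)"

lemma is_rep_direct_sum: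
  assumes r: "is_rep \<Gamma> a \<rho>" and s: "is_rep \<Gamma> b \<sigma>"
  shows "is_rep \<Gamma> (a + b) (direct_sum \<rho> \<sigma>)"
  unfolding is_rep_def direct_sum_def
proof (intro conjI ballI)
  fix g h assume g: "g \<in> carrier \<Gamma>" and h: "h \<in> carrier \<Gamma>"
  show "block_diag (\<rho> (g \<otimes>\<^bsub>\<Gamma>\<^esub> h)) (\<sigma> (g \<otimes>\<^bsub>\<Gamma>\<^esub> h)) = block_diag (\<rho> g) (\<sigma> g) * block_diag (\<rho> h) (\<sigma> h)"
    using block_diag_mult[OF rep_carrier[OF r g] rep_carrier[OF s g] rep_carrier[OF r h] rep_carrier[OF s h]]
      rep_mult[OF r g h] rep_mult[OF s g h] by simp
qed (use block_diag_carrier rep_carrier[OF r] rep_carrier[OF s] rep_one[OF r] rep_one[OF s] block_diag_one in auto)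

lemma intertwiner_hcat:
  assumes r: "is_rep \<Gamma> a \<rho>" and s: "is_rep \<Gamma> b \<sigma>" and psi: "is_rep \<Gamma> M \<psi>"
    and A: "intertwiner \<Gamma> a \<rho> M \<psi> A" and B: "intertwiner \<Gamma> b \<sigma> M \<psi> B"
  shows "intertwiner \<Gamma> (a + b) (direct_sum \<rho> \<sigma>) M \<psi> (hcat A B)"
proof (rule intertwinerI)
  have Ac: "A \<in> carrier_mat M a" and Bc: "B \<in> carrier_mat M b"
    using intertwiner_carrier[OF A] intertwiner_carrier[OF B] .
  then show "hcat A B \<in> carrier_mat M (a + b)" by (rule hcat_carrier)
  fix g assume g: "g \<in> carrier \<Gamma>"
  have "hcat A B * direct_sum \<rho> \<sigma> g = hcat (A * \<rho> g) (B * \<sigma> g)"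
    unfolding direct_sum_def using hcat_mult_block_diag[OF Ac Bc rep_carrier[OF r g] rep_carrier[OF s g]] .
  also have "\<dots> = hcat (\<psi> g * A) (\<psi> g * B)" using intertwiner_eq[OF A g] intertwiner_eq[OF B g] by simp
  also have "\<dots> = \<psi> g * hcat A B" using mult_hcat[OF rep_carrier[OF psi g] Ac Bc] by simp
  finally show "hcat A B * direct_sum \<rho> \<sigma> g = \<psi> g * hcat A B" .
qed

lemma intertwiner_into_direct_sum:
  assumes r: "is_rep \<Gamma> a \<rho>" and s: "is_rep \<Gamma> b \<sigma>" and t: "is_rep \<Gamma> e \<tau>"
    and Z: "intertwiner \<Gamma> e \<tau> (a + b) (direct_sum \<rho> \<sigma>) Z"
  shows "intertwiner \<Gamma> e \<tau> a \<rho> (top_rows Z a)" and "intertwiner \<Gamma> e \<tau> b \<sigma> (bottom_rows Z a)"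
proof -
  have Zc: "Z \<in> carrier_mat (a + b) e" using intertwiner_carrier[OF Z] .
  show "intertwiner \<Gamma> e \<tau> a \<rho> (top_rows Z a)"
  proof (rule intertwinerI[OF top_rows_carrier[OF Zc]])
    fix g assume g: "g \<in> carrier \<Gamma>"
    have "top_rows Z a * \<tau> g = top_rows (direct_sum \<rho> \<sigma> g * Z) a"
      using top_rows_mult[OF Zc rep_carrier[OF t g]] intertwiner_eq[OF Z g] by simp
    also have "\<dots> = \<rho> g * top_rows Z a"
      unfolding direct_sum_def using top_rows_block_diag_mult[OF rep_carrier[OF r g] rep_carrier[OF s g] Zc] .
    finally show "top_rows Z a * \<tau> g = \<rho> g * top_rows Z a" .
  qed
  show "intertwiner \<Gamma> e \<tau> b \<sigma> (bottom_rows Z a)"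
  proof (rule intertwinerI[OF bottom_rows_carrier[OF Zc]])
    fix g assume g: "g \<in> carrier \<Gamma>"
    have "bottom_rows Z a * \<tau> g = bottom_rows (direct_sum \<rho> \<sigma> g * Z) a"
      using bottom_rows_mult[OF Zc rep_carrier[OF t g]] intertwiner_eq[OF Z g] by simp
    also have "\<dots> = \<sigma> g * bottom_rows Z a"
      unfolding direct_sum_def using bottom_rows_block_diag_mult[OF rep_carrier[OF r g] rep_carrier[OF s g] Zc] .
    finally show "bottom_rows Z a * \<tau> g = \<sigma> g * bottom_rows Z a" .
  qed
qed

lemma no_nonzero_intertwiner_into_direct_sum:
  assumes r: "is_rep \<Gamma> a \<rho>" and s: "is_rep \<Gamma> b \<sigma>" and t: "is_rep \<Gamma> e \<tau>"
    and "\<not> has_nonzero_intertwiner \<Gamma> e \<tau> a \<rho>" and "\<not> has_nonzero_intertwiner \<Gamma> e \<tau> b \<sigma>"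
  shows "\<not> has_nonzero_intertwiner \<Gamma> e \<tau> (a + b) (direct_sum \<rho> \<sigma>)"
  unfolding has_nonzero_intertwiner_def
proof (intro notI, elim exE conjE)
  fix Z assume Z: "intertwiner \<Gamma> e \<tau> (a + b) (direct_sum \<rho> \<sigma>) Z" and nz: "Z \<noteq> 0\<^sub>m (a + b) e"
  note parts = intertwiner_into_direct_sum[OF r s t Z]
  have "top_rows Z a = 0\<^sub>m a e" and "bottom_rows Z a = 0\<^sub>m b e"
    using parts assms(4,5) unfolding has_nonzero_intertwiner_def by auto
  then show False using eq_zero_if_top_bottom_rows_zero[OF intertwiner_carrier[OF Z]] nz by blast
qed

text \<open>An irreducible \<open>\<tau>\<close> in the kernel of \<open>[A B] : \<rho> \<oplus> \<sigma> \<rightarrow> \<psi>\<close> projects to \<open>\<rho>\<close> and \<open>\<sigma>\<close>;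
  injectivity of \<open>A\<close> and \<open>B\<close> forces both projections to be nonzero, and then by Schur's
  lemma \<open>\<tau> \<cong> \<rho>\<close> maps nontrivially into \<open>\<sigma>\<close>.\<close>

lemma inj_hcat_intertwiner:
  assumes psi: "is_rep \<Gamma> M \<psi>" and r: "is_irrep \<Gamma> a \<rho>" and s: "is_rep \<Gamma> b \<sigma>"
    and A: "intertwiner \<Gamma> a \<rho> M \<psi> A" "inj_mat A" and B: "intertwiner \<Gamma> b \<sigma> M \<psi> B" "inj_mat B"
    and no_hom: "\<not> has_nonzero_intertwiner \<Gamma> a \<rho> b \<sigma>"
  shows "inj_mat (hcat A B)"
proof (rule ccontr)
  assume not_inj: "\<not> inj_mat (hcat A B)"
  have rr: "is_rep \<Gamma> a \<rho>" using irrep_rep[OF r] .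
  have Ac: "A \<in> carrier_mat M a" and Bc: "B \<in> carrier_mat M b"
    using intertwiner_carrier[OF A(1)] intertwiner_carrier[OF B(1)] .
  have ABc: "hcat A B \<in> carrier_mat M (a + b)" using hcat_carrier[OF Ac Bc] .
  have S: "is_rep \<Gamma> (a + b) (direct_sum \<rho> \<sigma>)" using is_rep_direct_sum[OF rr s] .
  let ?K = "{v\<in>carrier_vec (a + b). hcat A B *\<^sub>v v = 0\<^sub>v M}"
  have "invariant_subspace \<Gamma> (a + b) (direct_sum \<rho> \<sigma>) ?K"
    using kernel_invariant[OF S psi intertwiner_hcat[OF rr s psi A(1) B(1)]] .
  moreover have "?K \<noteq> {0\<^sub>v (a + b)}" using not_inj ABc unfolding inj_mat_def by auto
  ultimately obtain e \<tau> C where C: "is_irrep \<Gamma> e \<tau>" "C \<in> carrier_mat (a + b) e" "inj_mat C"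
    "col_space C \<subseteq> ?K" "intertwiner \<Gamma> e \<tau> (a + b) (direct_sum \<rho> \<sigma>) C"
    by (rule irreducible_subrep[OF S])
  have t: "is_rep \<Gamma> e \<tau>" using irrep_rep[OF C(1)] .
  have C1: "intertwiner \<Gamma> e \<tau> a \<rho> (top_rows C a)" and C2: "intertwiner \<Gamma> e \<tau> b \<sigma> (bottom_rows C a)"
    using intertwiner_into_direct_sum[OF rr s t C(5)] .
  have "hcat A B * C = 0\<^sub>m M e"
  proof (rule mat_eq_by_mult_vec[of _ M e])
    fix u :: "complex vec" assume u: "u \<in> carrier_vec e"
    have "C *\<^sub>v u \<in> ?K" using C(2,4) u unfolding col_space_def by auto
    then show "(hcat A B * C) *\<^sub>v u = 0\<^sub>m M e *\<^sub>v u" using ABc C(2) u by simp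
  qed (use ABc C(2) in simp_all)
  then have C1_nz: "top_rows C a \<noteq> 0\<^sub>m a e" and C2_nz: "bottom_rows C a \<noteq> 0\<^sub>m b e"
    using hcat_mult_eq_zero_imp_blocks_nonzero[OF Ac A(2) Bc B(2) C(2)]
      inj_mat_nonzero[OF C(2,3) irrep_pos[OF C(1)]] by auto
  have ea: "e = a" and "invertible_mat (top_rows C a)" using schur_lemma[OF C(1) r C1 C1_nz] by auto
  then have "(\<tau>, \<rho>) \<in> rep_iso \<Gamma> a" using rep_isoI C1 by simp
  moreover have "has_nonzero_intertwiner \<Gamma> a \<tau> b \<sigma>"
    using C2 C2_nz ea unfolding has_nonzero_intertwiner_def by auto
  ultimately show False using has_nonzero_intertwiner_iso_left[OF _ rr s] t ea no_hom by blast
qed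

text \<open>Pairwise non-isomorphic irreducible subrepresentations of \<open>\<psi>\<close> have independent images:
  by induction, \<open>\<psi>\<close> contains their direct sum, into which no further \<open>\<pi> j\<close> maps.\<close>

lemma direct_sum_of_embedded_irreps:
  assumes psi: "is_rep \<Gamma> M \<psi>"
    and irr: "\<And>i. i \<in> I \<Longrightarrow> is_irrep \<Gamma> (d i) (\<pi> i)"
    and emb: "\<And>i. i \<in> I \<Longrightarrow> intertwiner \<Gamma> (d i) (\<pi> i) M \<psi> (A i) \<and> inj_mat (A i)"
    and distinct: "\<And>i j. i \<in> I \<Longrightarrow> j \<in> I \<Longrightarrow> i \<noteq> j \<Longrightarrow>
      \<not> has_nonzero_intertwiner \<Gamma> (d i) (\<pi> i) (d j) (\<pi> j)"
    and F: "finite F" "F \<subseteq> I"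
  shows "\<exists>S B. is_rep \<Gamma> (sum d F) S \<and> intertwiner \<Gamma> (sum d F) S M \<psi> B \<and> inj_mat B \<and>
    (\<forall>j\<in>I - F. \<not> has_nonzero_intertwiner \<Gamma> (d j) (\<pi> j) (sum d F) S)"
  using F
proof (induction F rule: finite_induct)
  case empty
  have "intertwiner \<Gamma> 0 (\<lambda>_. 1\<^sub>m 0) M \<psi> (0\<^sub>m M 0)"
  proof (rule intertwinerI)
    fix g assume "g \<in> carrier \<Gamma>"
    then have "\<psi> g \<in> carrier_mat M M" using rep_carrier[OF psi] by blast
    then show "0\<^sub>m M 0 * 1\<^sub>m 0 = \<psi> g * 0\<^sub>m M 0" by (intro eq_matI) auto
  qed simp
  moreover have "inj_mat (0\<^sub>m M 0)" by (rule inj_matI[of _ M 0]) (auto dest: carrier_vec_0_eq)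
  moreover have "is_rep \<Gamma> 0 (\<lambda>_. 1\<^sub>m 0)" unfolding is_rep_def by simp
  moreover have "\<not> has_nonzero_intertwiner \<Gamma> (d j) (\<pi> j) 0 (\<lambda>_. 1\<^sub>m 0)" for j
    unfolding has_nonzero_intertwiner_def by (auto dest!: intertwiner_carrier intro!: eq_matI)
  ultimately show ?case by auto
next
  case (insert x F)
  have x: "x \<in> I" and FI: "F \<subseteq> I" using insert.prems by auto
  obtain S B where S: "is_rep \<Gamma> (sum d F) S" and B: "intertwiner \<Gamma> (sum d F) S M \<psi> B" "inj_mat B"
    and none: "\<And>j. j \<in> I - F \<Longrightarrow> \<not> has_nonzero_intertwiner \<Gamma> (d j) (\<pi> j) (sum d F) S"
    using insert.IH[OF FI] by blast
  have rx: "is_rep \<Gamma> (d x) (\<pi> x)" using irrep_rep[OF irr[OF x]] .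
  have dims: "sum d (insert x F) = d x + sum d F" using insert.hyps by simp
  have Ax: "intertwiner \<Gamma> (d x) (\<pi> x) M \<psi> (A x)" "inj_mat (A x)" using emb[OF x] by auto
  have "x \<in> I - F" using x insert.hyps(2) by simp
  then have "inj_mat (hcat (A x) B)" using inj_hcat_intertwiner[OF psi irr[OF x] S Ax B none] by blast
  moreover have "intertwiner \<Gamma> (d x + sum d F) (direct_sum (\<pi> x) S) M \<psi> (hcat (A x) B)"
    using intertwiner_hcat[OF rx S psi Ax(1) B(1)] .
  moreover have "\<not> has_nonzero_intertwiner \<Gamma> (d j) (\<pi> j) (d x + sum d F) (direct_sum (\<pi> x) S)"
    if j: "j \<in> I - insert x F" for j
    using no_nonzero_intertwiner_into_direct_sum[OF rx S irrep_rep[OF irr[of j]]] distinct[of j x] none[of j] j x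
    by auto
  ultimately show ?case unfolding dims using is_rep_direct_sum[OF rx S] by blast
qed

lemma card_le_if_embedded_irreps:
  assumes psi: "is_rep \<Gamma> M \<psi>" and M: "M > 0" and fin: "finite I"
    and irr: "\<And>i. i \<in> I \<Longrightarrow> is_irrep \<Gamma> (d i) (\<pi> i)"
    and emb: "\<And>i. i \<in> I \<Longrightarrow> \<exists>A. intertwiner \<Gamma> (d i) (\<pi> i) M \<psi> A \<and> inj_mat A"
    and distinct: "\<And>i j. i \<in> I \<Longrightarrow> j \<in> I \<Longrightarrow> i \<noteq> j \<Longrightarrow>
      \<not> has_nonzero_intertwiner \<Gamma> (d i) (\<pi> i) (d j) (\<pi> j)"
    and large: "\<And>i. i \<in> I \<Longrightarrow> M \<le> k * d i"
  shows "card I \<le> k"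
proof -
  obtain A where A: "\<And>i. i \<in> I \<Longrightarrow> intertwiner \<Gamma> (d i) (\<pi> i) M \<psi> (A i) \<and> inj_mat (A i)"
    using emb by metis
  obtain S B where "intertwiner \<Gamma> (sum d I) S M \<psi> B" "inj_mat B"
    using direct_sum_of_embedded_irreps[of \<Gamma> M \<psi> I d \<pi> A, OF psi irr A distinct fin subset_refl] by blast
  then have le: "sum d I \<le> M" using inj_mat_dim_le intertwiner_carrier by blast
  have "card I * M = (\<Sum>i\<in>I. M)" by simp
  also have "\<dots> \<le> (\<Sum>i\<in>I. k * d i)" using large by (rule sum_mono)
  also have "\<dots> = k * sum d I" by (simp add: sum_distrib_left)
  also have "\<dots> \<le> k * M" using le by simp
  finally show ?thesis using M by simp
qed

section \<open>Induced representations and Frobenius reciprocity\<close>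

lemma sum_atLeast0_lessThan_mult_blocks:
  "(\<Sum>s\<in>{0..<k*d}. f s) = (\<Sum>l<k. \<Sum>e<d. f (l*d + e :: nat))"
proof (induction k)
  case (Suc k)
  have "(\<Sum>s\<in>{0..<Suc k * d}. f s) = (\<Sum>s\<in>{0..<k*d + d}. f s)" by (simp add: add.commute)
  also have "\<dots> = (\<Sum>s\<in>{0..<k*d}. f s) + (\<Sum>e\<in>{0..<d}. f (k*d + e))"
    by (rule sum_atLeast0_lessThan_add_split)
  also have "\<dots> = (\<Sum>l<Suc k. \<Sum>e<d. f (l*d + e))" using Suc by (simp add: lessThan_atLeast0)
  finally show ?case .
qed simp

lemma block_index_less:
  assumes "i < k" "a < (d::nat)"
  shows "i*d + a < k*d"
proof -
  have "i*d + a < Suc i * d" using assms by simp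
  also have "\<dots> \<le> k * d" using assms by (intro mult_le_mono1) simp
  finally show ?thesis .
qed

lemma block_indexE:
  assumes "r < k * (d::nat)"
  obtains i a where "r = i*d + a" "i < k" "a < d"
proof
  show "r = r div d * d + r mod d" by simp
  show "r div d < k" using assms by (simp add: less_mult_imp_div_less mult.commute)
  show "r mod d < d" using assms by (cases "d = 0") auto
qed

text \<open>\<open>t 0, \<dots>, t (k - 1)\<close> represent the right cosets of \<open>H\<close>, with \<open>t i0 = \<one>\<close>.\<close>

locale right_transversal = group G + subgroup H G for G :: "('g,'b) monoid_scheme" (structure) and H +
  fixes k :: nat and t :: "nat \<Rightarrow> 'g" and i0 :: nat
  assumes t_carrier: "\<And>i. i < k \<Longrightarrow> t i \<in> carrier G"
    and i0: "i0 < k" and t_i0: "t i0 = \<one>"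
    and unique_coset: "\<And>g. g \<in> carrier G \<Longrightarrow> \<exists>!j. j < k \<and> g \<otimes> inv (t j) \<in> H"
begin

abbreviation subgrp :: "('g,'b) monoid_scheme" where "subgrp \<equiv> G\<lparr>carrier := H\<rparr>"

lemma group_subgrp: "group subgrp"
  using subgroup_is_group[OF is_group] .

lemma index_pos: "k > 0"
  using i0 by simp

lemma inv_mult_cancel_left: "a \<in> carrier G \<Longrightarrow> b \<in> carrier G \<Longrightarrow> inv a \<otimes> (a \<otimes> b) = b"
  by (simp add: m_assoc[symmetric])

definition coset_index :: "'g \<Rightarrow> nat" where
  "coset_index g = (THE j. j < k \<and> g \<otimes> inv (t j) \<in> H)"

lemma coset_index: "g \<in> carrier G \<Longrightarrow> coset_index g < k \<and> g \<otimes> inv (t (coset_index g)) \<in> H"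
  unfolding coset_index_def using theI'[OF unique_coset] by blast

lemma coset_index_unique: "g \<in> carrier G \<Longrightarrow> l < k \<Longrightarrow> g \<otimes> inv (t l) \<in> H \<Longrightarrow> l = coset_index g"
  using unique_coset coset_index by blast

text \<open>Block \<open>(i, j)\<close>, i.e. rows \<open>i*d ..< i*d + d\<close> and columns \<open>j*d ..< j*d + d\<close>, of
  \<open>induced d \<sigma> g\<close> is \<open>\<sigma> (t i \<otimes> g \<otimes> inv (t j))\<close> if this lies in \<open>H\<close>, and zero otherwise.\<close>

definition induced :: "nat \<Rightarrow> ('g \<Rightarrow> complex mat) \<Rightarrow> 'g \<Rightarrow> complex mat" where
  "induced d \<sigma> g = mat (k*d) (k*d) (\<lambda>(r,c).
     if t (r div d) \<otimes> g \<otimes> inv (t (c div d)) \<in> H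
     then \<sigma> (t (r div d) \<otimes> g \<otimes> inv (t (c div d))) $$ (r mod d, c mod d) else 0)"

lemma induced_carrier [simp]: "induced d \<sigma> g \<in> carrier_mat (k*d) (k*d)"
  and induced_dims [simp]: "dim_row (induced d \<sigma> g) = k*d" "dim_col (induced d \<sigma> g) = k*d"
  unfolding induced_def by simp_all

lemma induced_entry:
  assumes "i < k" "a < d" "l < k" "e < d"
  shows "induced d \<sigma> g $$ (i*d + a, l*d + e) =
    (if t i \<otimes> g \<otimes> inv (t l) \<in> H then \<sigma> (t i \<otimes> g \<otimes> inv (t l)) $$ (a, e) else 0)"
  unfolding induced_def using assms block_index_less[of i k a d] block_index_less[of l k e d] by simp

lemma induced_mult_entry:
  assumes g: "g \<in> carrier G" and i: "i < k" and a: "a < d" and M: "M \<in> carrier_mat (k*d) n" and c: "c < n"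
  shows "(induced d \<sigma> g * M) $$ (i*d + a, c) =
    (\<Sum>e<d. \<sigma> (t i \<otimes> g \<otimes> inv (t (coset_index (t i \<otimes> g)))) $$ (a, e) * M $$ (coset_index (t i \<otimes> g) * d + e, c))"
proof -
  let ?j = "coset_index (t i \<otimes> g)"
  have tig: "t i \<otimes> g \<in> carrier G" using t_carrier[OF i] g by simp
  have j: "?j < k" "t i \<otimes> g \<otimes> inv (t ?j) \<in> H" using coset_index[OF tig] by auto
  have "(induced d \<sigma> g * M) $$ (i*d + a, c) = (\<Sum>s\<in>{0..<k*d}. induced d \<sigma> g $$ (i*d + a, s) * M $$ (s, c))"
    using block_index_less[OF i a] M c by (simp add: scalar_prod_def row_def col_def)
  also have "\<dots> = (\<Sum>l<k. \<Sum>e<d. induced d \<sigma> g $$ (i*d + a, l*d + e) * M $$ (l*d + e, c))"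
    by (rule sum_atLeast0_lessThan_mult_blocks)
  also have "\<dots> = (\<Sum>l<k. if l = ?j then (\<Sum>e<d. \<sigma> (t i \<otimes> g \<otimes> inv (t l)) $$ (a, e) * M $$ (l*d + e, c)) else 0)"
  proof (rule sum.cong[OF refl])
    fix l assume l: "l \<in> {..<k}"
    have "l \<noteq> ?j \<Longrightarrow> t i \<otimes> g \<otimes> inv (t l) \<notin> H" using coset_index_unique[OF tig, of l] l by auto
    then show "(\<Sum>e<d. induced d \<sigma> g $$ (i*d + a, l*d + e) * M $$ (l*d + e, c)) =
      (if l = ?j then (\<Sum>e<d. \<sigma> (t i \<otimes> g \<otimes> inv (t l)) $$ (a, e) * M $$ (l*d + e, c)) else 0)"
      using induced_entry[OF i a, of l] l j by auto
  qed
  also have "\<dots> = (\<Sum>e<d. \<sigma> (t i \<otimes> g \<otimes> inv (t ?j)) $$ (a, e) * M $$ (?j*d + e, c))"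
    using j(1) by (simp add: sum.delta)
  finally show ?thesis .
qed

lemma induced_mult:
  assumes s: "is_rep subgrp d \<sigma>" and g: "g \<in> carrier G" and h: "h \<in> carrier G"
  shows "induced d \<sigma> (g \<otimes> h) = induced d \<sigma> g * induced d \<sigma> h"
proof (rule eq_matI)
  fix r c assume "r < dim_row (induced d \<sigma> g * induced d \<sigma> h)" "c < dim_col (induced d \<sigma> g * induced d \<sigma> h)"
  then have "r < k * d" "c < k * d" by simp_all
  obtain i a where ia: "r = i*d + a" "i < k" "a < d" using block_indexE[OF \<open>r < k * d\<close>] .
  obtain j b where jb: "c = j*d + b" "j < k" "b < d" using block_indexE[OF \<open>c < k * d\<close>] .
  have ti: "t i \<in> carrier G" and tj: "t j \<in> carrier G" using t_carrier ia jb by auto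
  define j0 where "j0 = coset_index (t i \<otimes> g)"
  have j0: "j0 < k" "t i \<otimes> g \<otimes> inv (t j0) \<in> H" using coset_index ti g unfolding j0_def by auto
  have tj0: "t j0 \<in> carrier G" using t_carrier j0 by auto
  define x where "x = t i \<otimes> g \<otimes> inv (t j0)"
  define y where "y = t j0 \<otimes> h \<otimes> inv (t j)"
  define z where "z = t i \<otimes> (g \<otimes> h) \<otimes> inv (t j)"
  have xH: "x \<in> H" using j0(2) unfolding x_def .
  have xc: "x \<in> carrier G" and yc: "y \<in> carrier G" unfolding x_def y_def using ti tj tj0 g h by auto
  have xyz: "x \<otimes> y = z" unfolding x_def y_def z_def using ti tj tj0 g h
    by (simp add: m_assoc inv_mult_cancel_left)
  have "y = inv x \<otimes> z" using xyz[symmetric] inv_mult_cancel_left[OF xc yc] by simp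
  then have yH_iff: "y \<in> H \<longleftrightarrow> z \<in> H"
    using xyz xH subgroup.m_closed[OF subgroup_axioms] subgroup.m_inv_closed[OF subgroup_axioms] by metis
  have "(induced d \<sigma> g * induced d \<sigma> h) $$ (r, c) = (\<Sum>e<d. \<sigma> x $$ (a, e) * induced d \<sigma> h $$ (j0*d + e, j*d + b))"
    unfolding ia(1) jb(1) x_def j0_def
    using induced_mult_entry[OF g ia(2,3) induced_carrier] block_index_less[OF jb(2,3)] by simp
  also have "\<dots> = (if z \<in> H then \<sigma> z $$ (a, b) else 0)"
  proof (cases "z \<in> H")
    case True
    then have yH: "y \<in> H" using yH_iff by simp
    have "(\<Sum>e<d. \<sigma> x $$ (a, e) * induced d \<sigma> h $$ (j0*d + e, j*d + b)) = (\<Sum>e<d. \<sigma> x $$ (a, e) * \<sigma> y $$ (e, b))"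
      using induced_entry[OF j0(1) _ jb(2,3)] yH unfolding y_def by simp
    also have "\<dots> = (\<sigma> x * \<sigma> y) $$ (a, b)"
    proof -
      have "\<sigma> x \<in> carrier_mat d d" "\<sigma> y \<in> carrier_mat d d" using rep_carrier[OF s] xH yH by auto
      then show ?thesis using ia jb by (simp add: scalar_prod_def row_def col_def lessThan_atLeast0)
    qed
    also have "\<dots> = \<sigma> z $$ (a, b)" using rep_mult[OF s, of x y] xH yH xyz by simp
    finally show ?thesis using True by simp
  next
    case False
    then show ?thesis using induced_entry[OF j0(1) _ jb(2,3)] yH_iff unfolding y_def by simp
  qed
  also have "\<dots> = induced d \<sigma> (g \<otimes> h) $$ (r, c)"
    unfolding ia(1) jb(1) z_def using induced_entry[OF ia(2,3) jb(2,3)] by simp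
  finally show "induced d \<sigma> (g \<otimes> h) $$ (r, c) = (induced d \<sigma> g * induced d \<sigma> h) $$ (r, c)" by simp
qed simp_all

lemma induced_one:
  assumes s: "is_rep subgrp d \<sigma>"
  shows "induced d \<sigma> \<one> = 1\<^sub>m (k * d)"
proof (rule eq_matI)
  fix r c assume "r < dim_row (1\<^sub>m (k * d) :: complex mat)" "c < dim_col (1\<^sub>m (k * d) :: complex mat)"
  then have rc: "r < k * d" "c < k * d" by simp_all
  obtain i a where ia: "r = i*d + a" "i < k" "a < d" using block_indexE[OF rc(1)] .
  obtain j b where jb: "c = j*d + b" "j < k" "b < d" using block_indexE[OF rc(2)] .
  have ti: "t i \<in> carrier G" and tj: "t j \<in> carrier G" using t_carrier ia jb by auto
  have "t i \<otimes> \<one> \<otimes> inv (t j) \<in> H \<longleftrightarrow> i = j"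
  proof
    assume "t i \<otimes> \<one> \<otimes> inv (t j) \<in> H"
    then show "i = j" using coset_index_unique[OF ti jb(2)] coset_index_unique[OF ti ia(2)] ti by simp
  qed (use ti in simp)
  moreover have "r = c \<longleftrightarrow> i = j \<and> a = b"
  proof
    assume "r = c"
    then have "r div d = c div d" "r mod d = c mod d" by simp_all
    then show "i = j \<and> a = b" using ia jb by simp
  qed (use ia jb in simp)
  ultimately show "induced d \<sigma> \<one> $$ (r, c) = 1\<^sub>m (k * d) $$ (r, c)"
    unfolding ia(1) jb(1) using induced_entry[OF ia(2,3) jb(2,3)] rep_one[OF s] ti rc ia jb by auto
qed simp_all

lemma is_rep_induced:
  assumes "is_rep subgrp d \<sigma>"
  shows "is_rep G (k * d) (induced d \<sigma>)"
  unfolding is_rep_def using induced_mult[OF assms] induced_one[OF assms] by auto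

text \<open>Frobenius reciprocity, in the two directions needed: the block rows \<open>Q \<pi> (t i)\<close> assemble
  an \<open>H\<close>-map \<open>Q : \<pi> \<rightarrow> \<sigma>\<close> into a \<open>G\<close>-map \<open>\<pi> \<rightarrow> induced d \<sigma>\<close>, and the block row \<open>i0\<close> of a
  \<open>G\<close>-map \<open>\<pi> \<rightarrow> induced d \<sigma>\<close> is an \<open>H\<close>-map \<open>\<pi> \<rightarrow> \<sigma>\<close>.\<close>

definition lift_to_induced :: "nat \<Rightarrow> nat \<Rightarrow> ('g \<Rightarrow> complex mat) \<Rightarrow> complex mat \<Rightarrow> complex mat" where
  "lift_to_induced d m \<pi> Q = mat (k*d) m (\<lambda>(r,c). (Q * \<pi> (t (r div d))) $$ (r mod d, c))"

definition base_block :: "nat \<Rightarrow> nat \<Rightarrow> complex mat \<Rightarrow> complex mat" where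
  "base_block d m \<Phi> = mat d m (\<lambda>(a,c). \<Phi> $$ (i0*d + a, c))"

lemma lift_to_induced_carrier: "lift_to_induced d m \<pi> Q \<in> carrier_mat (k*d) m"
  and lift_to_induced_dims [simp]:
    "dim_row (lift_to_induced d m \<pi> Q) = k*d" "dim_col (lift_to_induced d m \<pi> Q) = m"
  and lift_to_induced_entry:
    "i < k \<Longrightarrow> a < d \<Longrightarrow> c < m \<Longrightarrow> lift_to_induced d m \<pi> Q $$ (i*d + a, c) = (Q * \<pi> (t i)) $$ (a, c)"
  unfolding lift_to_induced_def using block_index_less[of i k a d] by simp_all

lemma intertwiner_lift_to_induced:
  assumes p: "is_rep G m \<pi>" and s: "is_rep subgrp d \<sigma>" and Q: "intertwiner subgrp m \<pi> d \<sigma> Q"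
  shows "intertwiner G m \<pi> (k*d) (induced d \<sigma>) (lift_to_induced d m \<pi> Q)"
proof (rule intertwinerI[OF lift_to_induced_carrier], rule eq_matI)
  let ?\<Phi> = "lift_to_induced d m \<pi> Q"
  have \<Phi>c: "?\<Phi> \<in> carrier_mat (k*d) m" by (rule lift_to_induced_carrier)
  have Qc: "Q \<in> carrier_mat d m" using intertwiner_carrier[OF Q] .
  have pc: "\<pi> x \<in> carrier_mat m m" if "x \<in> carrier G" for x using rep_carrier[OF p] that by simp
  fix g r c assume g: "g \<in> carrier G"
    and "r < dim_row (induced d \<sigma> g * ?\<Phi>)" and c: "c < dim_col (induced d \<sigma> g * ?\<Phi>)"
  then have "r < k * d" by simp
  then obtain i a where ia: "r = i*d + a" "i < k" "a < d" by (rule block_indexE)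
  have cm: "c < m" using c \<Phi>c by simp
  have ti: "t i \<in> carrier G" using t_carrier ia by auto
  define j0 where "j0 = coset_index (t i \<otimes> g)"
  have j0: "j0 < k" "t i \<otimes> g \<otimes> inv (t j0) \<in> H" using coset_index ti g unfolding j0_def by auto
  have tj0: "t j0 \<in> carrier G" using t_carrier j0 by auto
  define x where "x = t i \<otimes> g \<otimes> inv (t j0)"
  have xH: "x \<in> H" and sx: "\<sigma> x \<in> carrier_mat d d" using j0(2) rep_carrier[OF s] unfolding x_def by auto
  have xt: "x \<otimes> t j0 = t i \<otimes> g" unfolding x_def using ti g tj0 by (simp add: m_assoc)
  have "(?\<Phi> * \<pi> g) $$ (r, c) = (\<Sum>s\<in>{0..<m}. ?\<Phi> $$ (i*d + a, s) * \<pi> g $$ (s, c))"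
    using block_index_less[OF ia(2,3)] cm \<Phi>c pc[OF g] ia(1)
    by (simp add: scalar_prod_def row_def col_def)
  also have "\<dots> = (Q * \<pi> (t i) * \<pi> g) $$ (a, c)"
    using lift_to_induced_entry[OF ia(2,3)] Qc pc[OF ti] pc[OF g] ia cm
    by (simp add: scalar_prod_def row_def col_def del: assoc_mult_mat)
  also have "\<dots> = (Q * \<pi> (t i \<otimes> g)) $$ (a, c)" using Qc pc[OF ti] pc[OF g] rep_mult[OF p ti g] by simp
  finally have lhs: "(?\<Phi> * \<pi> g) $$ (r, c) = (Q * \<pi> (t i \<otimes> g)) $$ (a, c)" .
  have "(induced d \<sigma> g * ?\<Phi>) $$ (r, c) = (\<Sum>e<d. \<sigma> x $$ (a, e) * (Q * \<pi> (t j0)) $$ (e, c))"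
    unfolding ia(1) x_def j0_def
    using induced_mult_entry[OF g ia(2,3) \<Phi>c cm] lift_to_induced_entry j0(1) cm
    unfolding j0_def by simp
  also have "\<dots> = (\<sigma> x * Q * \<pi> (t j0)) $$ (a, c)"
    using sx Qc pc[OF tj0] ia cm by (simp add: scalar_prod_def row_def col_def lessThan_atLeast0)
  also have "\<dots> = (Q * (\<pi> x * \<pi> (t j0))) $$ (a, c)"
  proof -
    have "\<sigma> x * Q * \<pi> (t j0) = Q * \<pi> x * \<pi> (t j0)" using intertwiner_eq[OF Q] xH by simp
    then show ?thesis using Qc pc[OF tj0] pc[of x] xH by simp
  qed
  also have "\<dots> = (Q * \<pi> (t i \<otimes> g)) $$ (a, c)" using rep_mult[OF p _ tj0, of x] xH xt by simp
  finally show "(?\<Phi> * \<pi> g) $$ (r, c) = (induced d \<sigma> g * ?\<Phi>) $$ (r, c)" using lhs by simp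
qed (use rep_carrier[OF p] in auto)

lemma lift_to_induced_nonzero:
  assumes p: "is_rep G m \<pi>" and Q: "Q \<in> carrier_mat d m" "Q \<noteq> 0\<^sub>m d m"
  shows "lift_to_induced d m \<pi> Q \<noteq> 0\<^sub>m (k*d) m"
proof
  assume z: "lift_to_induced d m \<pi> Q = 0\<^sub>m (k*d) m"
  have "Q = 0\<^sub>m d m"
  proof (rule eq_matI)
    fix a c assume a: "a < dim_row (0\<^sub>m d m :: complex mat)" and c: "c < dim_col (0\<^sub>m d m :: complex mat)"
    have "Q $$ (a, c) = lift_to_induced d m \<pi> Q $$ (i0*d + a, c)"
      using lift_to_induced_entry[OF i0] a c t_i0 rep_one[OF p] Q(1) by simp
    then show "Q $$ (a, c) = 0\<^sub>m d m $$ (a, c)" using z a c block_index_less[OF i0, of a d] by simp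
  qed (use Q in simp_all)
  with Q(2) show False by simp
qed

lemma frobenius_to_induced:
  assumes p: "is_rep G m \<pi>" and s: "is_rep subgrp d \<sigma>" and Q: "has_nonzero_intertwiner subgrp m \<pi> d \<sigma>"
  shows "has_nonzero_intertwiner G m \<pi> (k * d) (induced d \<sigma>)"
  using Q intertwiner_lift_to_induced[OF p s] lift_to_induced_nonzero[OF p] intertwiner_carrier
  unfolding has_nonzero_intertwiner_def by blast

lemma base_block_mult_entry:
  assumes p: "is_rep G m \<pi>" and \<Phi>: "intertwiner G m \<pi> (k*d) (induced d \<sigma>) \<Phi>"
    and g: "g \<in> carrier G" and a: "a < d" and c: "c < m"
  shows "(base_block d m \<Phi> * \<pi> g) $$ (a, c) = (induced d \<sigma> g * \<Phi>) $$ (i0*d + a, c)"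
proof -
  have "(base_block d m \<Phi> * \<pi> g) $$ (a, c) = (\<Phi> * \<pi> g) $$ (i0*d + a, c)"
    using block_index_less[OF i0 a] intertwiner_carrier[OF \<Phi>] rep_carrier[OF p g] a c
    unfolding base_block_def by (simp add: scalar_prod_def row_def col_def)
  then show ?thesis using intertwiner_eq[OF \<Phi> g] by simp
qed

lemma intertwiner_base_block:
  assumes p: "is_rep G m \<pi>" and s: "is_rep subgrp d \<sigma>" and \<Phi>: "intertwiner G m \<pi> (k*d) (induced d \<sigma>) \<Phi>"
  shows "intertwiner subgrp m \<pi> d \<sigma> (base_block d m \<Phi>)"
proof (rule intertwinerI)
  show Qc: "base_block d m \<Phi> \<in> carrier_mat d m" unfolding base_block_def by simp
  fix h assume "h \<in> carrier subgrp"
  then have h: "h \<in> H" "h \<in> carrier G" by auto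
  have sh: "\<sigma> h \<in> carrier_mat d d" using rep_carrier[OF s] h by simp
  show "base_block d m \<Phi> * \<pi> h = \<sigma> h * base_block d m \<Phi>"
  proof (rule eq_matI)
    fix a c assume a: "a < dim_row (\<sigma> h * base_block d m \<Phi>)" and c: "c < dim_col (\<sigma> h * base_block d m \<Phi>)"
    have a': "a < d" and c': "c < m" using a c sh Qc by auto
    have "coset_index (t i0 \<otimes> h) = i0" using coset_index_unique[of "t i0 \<otimes> h" i0] t_i0 h i0 by simp
    then have "(base_block d m \<Phi> * \<pi> h) $$ (a, c) = (\<Sum>e<d. \<sigma> h $$ (a, e) * \<Phi> $$ (i0 * d + e, c))"
      using base_block_mult_entry[OF p \<Phi> h(2) a' c'] induced_mult_entry[OF h(2) i0 a' intertwiner_carrier[OF \<Phi>] c']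
        t_i0 h by simp
    also have "\<dots> = (\<sigma> h * base_block d m \<Phi>) $$ (a, c)"
      using sh a' c' unfolding base_block_def by (simp add: scalar_prod_def row_def col_def lessThan_atLeast0)
    finally show "(base_block d m \<Phi> * \<pi> h) $$ (a, c) = (\<sigma> h * base_block d m \<Phi>) $$ (a, c)" .
  qed (use Qc sh rep_carrier[OF p h(2)] in simp_all)
qed

text \<open>Row block \<open>j\<close> of \<open>\<Phi>\<close> is recovered from the base block through \<open>\<pi> (t j)\<close>.\<close>

lemma base_block_nonzero:
  assumes p: "is_rep G m \<pi>" and s: "is_rep subgrp d \<sigma>" and \<Phi>: "intertwiner G m \<pi> (k*d) (induced d \<sigma>) \<Phi>"
    and nz: "\<Phi> \<noteq> 0\<^sub>m (k*d) m"
  shows "base_block d m \<Phi> \<noteq> 0\<^sub>m d m"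
proof
  assume z: "base_block d m \<Phi> = 0\<^sub>m d m"
  have "\<Phi> = 0\<^sub>m (k*d) m"
  proof (rule eq_matI)
    fix r c assume "r < dim_row (0\<^sub>m (k*d) m :: complex mat)" and c: "c < dim_col (0\<^sub>m (k*d) m :: complex mat)"
    then have "r < k * d" by simp
    then obtain j b where jb: "r = j*d + b" "j < k" "b < d" by (rule block_indexE)
    have cm: "c < m" using c by simp
    have tj: "t j \<in> carrier G" using t_carrier jb by auto
    have "coset_index (t i0 \<otimes> t j) = j" using coset_index_unique[of "t i0 \<otimes> t j" j] t_i0 tj jb by simp
    then have "(base_block d m \<Phi> * \<pi> (t j)) $$ (b, c) = (\<Sum>e<d. (1\<^sub>m d :: complex mat) $$ (b, e) * \<Phi> $$ (j * d + e, c))"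
      using base_block_mult_entry[OF p \<Phi> tj jb(3) cm] induced_mult_entry[OF tj i0 jb(3) intertwiner_carrier[OF \<Phi>] cm]
        t_i0 tj rep_one[OF s] by simp
    also have "\<dots> = \<Phi> $$ (j*d + b, c)"
      using jb(3) by (simp add: sum.delta if_distrib[of "\<lambda>x. x * _"] cong: if_cong)
    finally show "\<Phi> $$ (r, c) = 0\<^sub>m (k*d) m $$ (r, c)"
      using z rep_carrier[OF p tj] jb cm block_index_less by simp
  qed (use intertwiner_carrier[OF \<Phi>] in simp_all)
  with nz show False by simp
qed

lemma frobenius_from_induced:
  assumes p: "is_rep G m \<pi>" and s: "is_rep subgrp d \<sigma>"
    and \<Phi>: "has_nonzero_intertwiner G m \<pi> (k*d) (induced d \<sigma>)"
  shows "has_nonzero_intertwiner subgrp m \<pi> d \<sigma>"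
  using \<Phi> intertwiner_base_block[OF p s] base_block_nonzero[OF p s]
  unfolding has_nonzero_intertwiner_def by blast

end

section \<open>Comparing the counting functions of a group and a subgroup of finite index\<close>

context right_transversal
begin

lemma irrep_restriction_has_irreducible_quotient:
  assumes p: "is_irrep G m \<pi>"
  obtains d \<sigma> where "is_irrep subgrp d \<sigma>" "has_nonzero_intertwiner subgrp m \<pi> d \<sigma>"
proof -
  have rH: "is_rep subgrp m \<pi>" using rep_restrict[OF irrep_rep[OF p] subset] .
  have dr: "is_rep subgrp m (dual subgrp \<pi>)" using is_rep_dual[OF group_subgrp rH] .
  obtain d \<tau> B where B: "is_irrep subgrp d \<tau>" "B \<in> carrier_mat m d" "inj_mat B"
    "col_space B \<subseteq> carrier_vec m" "intertwiner subgrp d \<tau> m (dual subgrp \<pi>) B"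
    by (rule irreducible_subrep[OF dr carrier_vec_invariant[OF dr] carrier_vec_nonzero[OF irrep_pos[OF p]]])
  have "intertwiner subgrp m \<pi> d (dual subgrp \<tau>) (transpose_mat B)"
    using intertwiner_to_dual[OF group_subgrp irrep_rep[OF B(1)] rH B(5)] .
  moreover have "transpose_mat B \<noteq> 0\<^sub>m d m"
    using inj_mat_nonzero[OF B(2,3) irrep_pos[OF B(1)]] transpose_mat_eq_zero_iff[OF B(2)] by simp
  ultimately show thesis
    using that[OF is_irrep_dual[OF group_subgrp B(1)]] unfolding has_nonzero_intertwiner_def by blast
qed

lemma irreducible_subrep_of_induced:
  assumes r: "is_irrep subgrp n \<rho>"
  obtains m \<pi> where "is_irrep G m \<pi>" "m \<le> k * n" "has_nonzero_intertwiner subgrp m \<pi> n \<rho>"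
proof -
  have ind: "is_rep G (k*n) (induced n \<rho>)" using is_rep_induced[OF irrep_rep[OF r]] .
  have "k * n > 0" using index_pos irrep_pos[OF r] by simp
  then obtain m \<pi> B where B: "is_irrep G m \<pi>" "B \<in> carrier_mat (k*n) m" "inj_mat B"
    "col_space B \<subseteq> carrier_vec (k*n)" "intertwiner G m \<pi> (k*n) (induced n \<rho>) B"
    by (rule irreducible_subrep[OF ind carrier_vec_invariant[OF ind] carrier_vec_nonzero])
  have "B \<noteq> 0\<^sub>m (k*n) m" using inj_mat_nonzero[OF B(2,3) irrep_pos[OF B(1)]] .
  then have "has_nonzero_intertwiner subgrp m \<pi> n \<rho>"
    using frobenius_from_induced[OF irrep_rep[OF B(1)] irrep_rep[OF r]] B(5)
    unfolding has_nonzero_intertwiner_def by blast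
  then show thesis using that B(1) inj_mat_dim_le[OF B(2,3)] by blast
qed

text \<open>Such classes embed into \<open>induced d \<sigma>\<close>, of dimension \<open>k * d\<close>, and have dimension at
  least \<open>d\<close>.\<close>

lemma card_classes_mapping_to_subgroup_irrep_le:
  assumes \<sigma>: "is_irrep subgrp d \<sigma>" and F: "finite F" "F \<subseteq> irrep_classes_upto G N"
    and maps: "\<And>x. x \<in> F \<Longrightarrow> has_nonzero_intertwiner subgrp (fst x) (class_rep G x) d \<sigma>"
  shows "card F \<le> k"
proof (rule card_le_if_embedded_irreps[where \<Gamma> = G and \<psi> = "induced d \<sigma>" and d = fst and \<pi> = "class_rep G"])
  show "is_rep G (k * d) (induced d \<sigma>)" using is_rep_induced[OF irrep_rep[OF \<sigma>]] .
  show "k * d > 0" using index_pos irrep_pos[OF \<sigma>] by simp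
  show "finite F" using F(1) .
  fix x assume x: "x \<in> F"
  then have xG: "x \<in> irrep_classes_upto G N" using F(2) by auto
  note \<pi> = class_rep(1)[OF xG]
  have \<pi>H: "is_rep subgrp (fst x) (class_rep G x)" using rep_restrict[OF irrep_rep[OF \<pi>] subset] .
  show "is_irrep G (fst x) (class_rep G x)" using \<pi> .
  obtain \<Phi> where "intertwiner G (fst x) (class_rep G x) (k * d) (induced d \<sigma>) \<Phi>" "\<Phi> \<noteq> 0\<^sub>m (k * d) (fst x)"
    using frobenius_to_induced[OF irrep_rep[OF \<pi>] irrep_rep[OF \<sigma>] maps[OF x]]
    unfolding has_nonzero_intertwiner_def by blast
  then show "\<exists>A. intertwiner G (fst x) (class_rep G x) (k * d) (induced d \<sigma>) A \<and> inj_mat A"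
    using intertwiner_from_irrep_inj[OF \<pi> is_rep_induced[OF irrep_rep[OF \<sigma>]]] by blast
  have "d \<le> fst x"
    using maps[OF x] intertwiner_to_irrep_dim_le[OF \<pi>H \<sigma>] unfolding has_nonzero_intertwiner_def by blast
  then show "k * d \<le> k * fst x" by simp
next
  fix x y assume "x \<in> F" "y \<in> F" "x \<noteq> y"
  then show "\<not> has_nonzero_intertwiner G (fst x) (class_rep G x) (fst y) (class_rep G y)"
    using no_nonzero_intertwiner_between_classes F(2) by blast
qed

text \<open>Dually, the duals of such classes embed into \<open>dual \<pi>\<close>, and \<open>\<pi>\<close> embeds into the
  representation induced from each of them.\<close>

lemma card_classes_mapped_from_group_irrep_le:
  assumes \<pi>: "is_irrep G m \<pi>" and F: "finite F" "F \<subseteq> irrep_classes_upto subgrp N"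
    and maps: "\<And>x. x \<in> F \<Longrightarrow> has_nonzero_intertwiner subgrp m \<pi> (fst x) (class_rep subgrp x)"
  shows "card F \<le> k"
proof (rule card_le_if_embedded_irreps[where \<Gamma> = subgrp and \<psi> = "dual subgrp \<pi>" and d = fst
    and \<pi> = "\<lambda>x. dual subgrp (class_rep subgrp x)"])
  have \<pi>H: "is_rep subgrp m \<pi>" using rep_restrict[OF irrep_rep[OF \<pi>] subset] .
  show "is_rep subgrp m (dual subgrp \<pi>)" using is_rep_dual[OF group_subgrp \<pi>H] .
  show "m > 0" using irrep_pos[OF \<pi>] .
  show "finite F" using F(1) .
  fix x assume x: "x \<in> F"
  then have xH: "x \<in> irrep_classes_upto subgrp N" using F(2) by auto
  note \<sigma> = class_rep(1)[OF xH]
  show "is_irrep subgrp (fst x) (dual subgrp (class_rep subgrp x))" using is_irrep_dual[OF group_subgrp \<sigma>] .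
  obtain Q where Q: "intertwiner subgrp m \<pi> (fst x) (class_rep subgrp x) Q" "Q \<noteq> 0\<^sub>m (fst x) m"
    using maps[OF x] unfolding has_nonzero_intertwiner_def by blast
  have "intertwiner subgrp (fst x) (dual subgrp (class_rep subgrp x)) m (dual subgrp \<pi>) (transpose_mat Q)"
    using intertwiner_dual[OF group_subgrp \<pi>H irrep_rep[OF \<sigma>] Q(1)] .
  moreover have "transpose_mat Q \<noteq> 0\<^sub>m m (fst x)"
    using transpose_mat_eq_zero_iff[OF intertwiner_carrier[OF Q(1)]] Q(2) by simp
  ultimately show "\<exists>A. intertwiner subgrp (fst x) (dual subgrp (class_rep subgrp x)) m (dual subgrp \<pi>) A \<and> inj_mat A"
    using intertwiner_from_irrep_inj[OF is_irrep_dual[OF group_subgrp \<sigma>] is_rep_dual[OF group_subgrp \<pi>H]] by blast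
  obtain \<Phi> where \<Phi>: "intertwiner G m \<pi> (k * fst x) (induced (fst x) (class_rep subgrp x)) \<Phi>"
    "\<Phi> \<noteq> 0\<^sub>m (k * fst x) m"
    using frobenius_to_induced[OF irrep_rep[OF \<pi>] irrep_rep[OF \<sigma>] maps[OF x]]
    unfolding has_nonzero_intertwiner_def by blast
  then have "inj_mat \<Phi>" using intertwiner_from_irrep_inj[OF \<pi> is_rep_induced[OF irrep_rep[OF \<sigma>]]] by blast
  then show "m \<le> k * fst x" using inj_mat_dim_le[OF intertwiner_carrier[OF \<Phi>(1)]] by simp
next
  fix x y assume "x \<in> F" "y \<in> F" "x \<noteq> y"
  then show "\<not> has_nonzero_intertwiner subgrp (fst x) (dual subgrp (class_rep subgrp x))
      (fst y) (dual subgrp (class_rep subgrp y))"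
    using no_nonzero_intertwiner_between_dual_classes[OF group_subgrp] F(2) by blast
qed

lemma R_irr_le_index_mult_R_irr_subgroup: "R_irr G N \<le> enat k * R_irr subgrp N"
proof -
  let ?R = "\<lambda>x y. has_nonzero_intertwiner subgrp (fst x) (class_rep G x) (fst y) (class_rep subgrp y)"
  have "ecard (irrep_classes_upto G N) \<le> enat k * ecard (irrep_classes_upto subgrp N)"
  proof (rule ecard_le_mult_if_relation_fibres_bounded[where R = ?R])
    fix x assume x: "x \<in> irrep_classes_upto G N"
    note \<pi> = class_rep(1)[OF x]
    have \<pi>H: "is_rep subgrp (fst x) (class_rep G x)" using rep_restrict[OF irrep_rep[OF \<pi>] subset] .
    obtain d \<sigma> where \<sigma>: "is_irrep subgrp d \<sigma>" "has_nonzero_intertwiner subgrp (fst x) (class_rep G x) d \<sigma>"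
      using irrep_restriction_has_irreducible_quotient[OF \<pi>] .
    have "d \<le> fst x"
      using \<sigma>(2) intertwiner_to_irrep_dim_le[OF \<pi>H \<sigma>(1)] unfolding has_nonzero_intertwiner_def by blast
    then have "d \<le> N" using x unfolding irrep_classes_upto_def by auto
    note y = class_of_irrep_upto[OF \<sigma>(1) this]
    have "is_irrep subgrp d (class_rep subgrp (d, rep_iso subgrp d `` {\<sigma>}))" using class_rep(1)[OF y(1)] by simp
    then have "?R x (d, rep_iso subgrp d `` {\<sigma>})"
      using has_nonzero_intertwiner_iso_right[OF \<pi>H irrep_rep[OF \<sigma>(1)] irrep_rep y(2) \<sigma>(2)] by simp
    then show "\<exists>y\<in>irrep_classes_upto subgrp N. ?R x y" using y(1) by blast
  next
    fix y assume y: "y \<in> irrep_classes_upto subgrp N"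
    show "finite {x \<in> irrep_classes_upto G N. ?R x y} \<and> card {x \<in> irrep_classes_upto G N. ?R x y} \<le> k"
      by (rule finite_if_finite_subsets_card_bdd, rule card_classes_mapping_to_subgroup_irrep_le[OF class_rep(1)[OF y]]) auto
  qed
  then show ?thesis unfolding R_irr_eq_ecard .
qed

lemma R_irr_subgroup_le_index_mult_R_irr: "R_irr subgrp N \<le> enat k * R_irr G (k * N)"
proof -
  let ?R = "\<lambda>x y. has_nonzero_intertwiner subgrp (fst y) (class_rep G y) (fst x) (class_rep subgrp x)"
  have "ecard (irrep_classes_upto subgrp N) \<le> enat k * ecard (irrep_classes_upto G (k * N))"
  proof (rule ecard_le_mult_if_relation_fibres_bounded[where R = ?R])
    fix x assume x: "x \<in> irrep_classes_upto subgrp N"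
    note \<sigma> = class_rep(1)[OF x]
    obtain m \<pi> where \<pi>: "is_irrep G m \<pi>" "m \<le> k * fst x"
      "has_nonzero_intertwiner subgrp m \<pi> (fst x) (class_rep subgrp x)"
      using irreducible_subrep_of_induced[OF \<sigma>] .
    have "m \<le> k * N" using \<pi>(2) x unfolding irrep_classes_upto_def by (auto intro: order_trans)
    note y = class_of_irrep_upto[OF \<pi>(1) this]
    have "is_irrep G m (class_rep G (m, rep_iso G m `` {\<pi>}))" using class_rep(1)[OF y(1)] by simp
    then have "?R x (m, rep_iso G m `` {\<pi>})"
      using has_nonzero_intertwiner_iso_left[OF rep_restrict[OF irrep_rep[OF \<pi>(1)] subset]
          rep_restrict[OF irrep_rep subset] irrep_rep[OF \<sigma>] rep_iso_restrict[OF y(2) subset] \<pi>(3)]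
      by simp
    then show "\<exists>y\<in>irrep_classes_upto G (k * N). ?R x y" using y(1) by blast
  next
    fix y assume y: "y \<in> irrep_classes_upto G (k * N)"
    show "finite {x \<in> irrep_classes_upto subgrp N. ?R x y} \<and> card {x \<in> irrep_classes_upto subgrp N. ?R x y} \<le> k"
      by (rule finite_if_finite_subsets_card_bdd, rule card_classes_mapped_from_group_irrep_le[OF class_rep(1)[OF y]]) auto
  qed
  then show ?thesis unfolding R_irr_eq_ecard .
qed

end

section \<open>Representation growth\<close>

text \<open>From \<open>b n \<le> k a (c n)\<close>: \<open>ln (b n) \<le> ln k + z ln c + z ln n\<close>, and the constant is
  absorbed by \<open>(y - z) ln n\<close> for large \<open>n\<close>.\<close>

lemma log_ratio_eventually_less:
  fixes a b :: "nat \<Rightarrow> nat" and k c :: nat and y z :: real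
  assumes k: "k > 0" and c: "c > 0" and le: "\<And>n. b n \<le> k * a (c * n)"
    and a: "\<And>m. m \<ge> M \<Longrightarrow> ln (real (a m)) / ln (real m) < z" and zy: "z < y"
  shows "\<forall>\<^sub>F n in sequentially. ln (real (b n)) / ln (real n) < y"
proof -
  have "0 \<le> ln (real (a (max M 2))) / ln (real (max M 2))"
    by (intro divide_nonneg_nonneg) (cases "a (max M 2) = 0"; simp)+
  then have zpos: "z > 0" using a[of "max M 2"] by simp
  define K where "K = (ln (real k) + z * ln (real c)) / (y - z)"
  have "\<forall>\<^sub>F n in sequentially. K \<le> ln (real n)"
    using filterlim_compose[OF ln_at_top filterlim_real_sequentially] unfolding filterlim_at_top by blast
  moreover have "\<forall>\<^sub>F n in sequentially. n \<ge> max M 2" by (rule eventually_ge_at_top)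
  ultimately show ?thesis
  proof eventually_elim
    case (elim n)
    have lnn: "ln (real n) > 0" using elim(2) by simp
    show ?case
    proof (cases "b n = 0")
      case True then show ?thesis using zy zpos lnn by simp
    next
      case False
      have "n \<le> c * n" using c by simp
      then have cn: "M \<le> c * n" "2 \<le> c * n" using elim(2) by linarith+
      then have "real (c * n) > 1" by linarith
      then have lncn: "ln (real (c * n)) > 0" by (rule ln_gt_zero)
      have a0: "a (c * n) > 0" using False le[of n] by (cases "a (c * n)") auto
      have la: "ln (real (a (c * n))) < z * ln (real (c * n))"
        using a[OF cn(1)] lncn by (simp add: divide_less_eq)
      have "ln (real (b n)) \<le> ln (real k * real (a (c * n)))"
        using le[of n] False k a0 by (subst ln_le_cancel_iff) (auto simp flip: of_nat_mult)
      also have "\<dots> = ln (real k) + ln (real (a (c * n)))" using k a0 by (simp add: ln_mult)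
      also have "\<dots> < ln (real k) + z * ln (real c) + z * ln (real n)"
        using la c elim(2) by (simp add: ln_mult distrib_left)
      also have "\<dots> \<le> y * ln (real n)"
        using elim(1) zy unfolding K_def by (simp add: divide_le_eq algebra_simps)
      finally show ?thesis using lnn by (simp add: divide_less_eq)
    qed
  qed
qed

lemma limsup_log_ratio_mono:
  fixes a b :: "nat \<Rightarrow> nat" and k c :: nat
  assumes k: "k > 0" and c: "c > 0" and le: "\<And>n. b n \<le> k * a (c * n)"
  shows "limsup (\<lambda>n. ereal (ln (real (b n)) / ln (real n))) \<le> limsup (\<lambda>n. ereal (ln (real (a n)) / ln (real n)))"
  unfolding Limsup_le_iff
proof (intro allI impI)
  fix y assume "limsup (\<lambda>n. ereal (ln (real (a n)) / ln (real n))) < y"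
  then obtain z where z: "limsup (\<lambda>n. ereal (ln (real (a n)) / ln (real n))) < ereal z" "ereal z < y"
    using ereal_dense2 by blast
  obtain M where M: "\<And>m. m \<ge> M \<Longrightarrow> ln (real (a m)) / ln (real m) < z"
    using Limsup_lessD[OF z(1)] unfolding eventually_sequentially by auto
  show "\<forall>\<^sub>F n in sequentially. ereal (ln (real (b n)) / ln (real n)) < y"
  proof (cases y)
    case (real y')
    then have "\<forall>\<^sub>F n in sequentially. ln (real (b n)) / ln (real n) < y'"
      using log_ratio_eventually_less[OF k c le M] z(2) by simp
    then show ?thesis using real by (auto elim: eventually_mono)
  qed (use z(2) in auto)
qed

lemma rep_growth_mono:
  fixes \<Gamma> :: "('g,'b) monoid_scheme" and \<Gamma>' :: "('h,'c) monoid_scheme"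
  assumes k: "k > 0" and c: "c > 0" and le: "\<And>n. R_irr \<Gamma> n \<le> enat k * R_irr \<Gamma>' (c * n)"
  shows "rep_growth \<Gamma> \<le> rep_growth \<Gamma>'"
proof (cases "\<exists>n. R_irr \<Gamma>' n = \<infinity>")
  case True
  then show ?thesis unfolding rep_growth_def by simp
next
  case False
  define a where "a n = the_enat (R_irr \<Gamma>' n)" for n
  define b where "b n = the_enat (R_irr \<Gamma> n)" for n
  have a_eq: "R_irr \<Gamma>' n = enat (a n)" for n
    using False unfolding a_def by (cases "R_irr \<Gamma>' n") (auto simp del: not_infinity_eq)
  have fin: "R_irr \<Gamma> n \<noteq> \<infinity>" for n using le[of n] a_eq[of "c * n"] by (auto dest: enat_ile)
  have b_eq: "R_irr \<Gamma> n = enat (b n)" for n using fin[of n] unfolding b_def by (cases "R_irr \<Gamma> n") auto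
  have "b n \<le> k * a (c * n)" for n using le[of n] unfolding a_eq b_eq by simp
  then have "limsup (\<lambda>n. ereal (ln (real (b n)) / ln (real n))) \<le> limsup (\<lambda>n. ereal (ln (real (a n)) / ln (real n)))"
    by (rule limsup_log_ratio_mono[OF k c])
  moreover have "\<not> (\<exists>n. R_irr \<Gamma> n = \<infinity>)" using fin by blast
  then have "rep_growth \<Gamma> = limsup (\<lambda>n. ereal (ln (real (b n)) / ln (real n)))"
    unfolding rep_growth_def b_def by (rule if_not_P)
  moreover have "rep_growth \<Gamma>' = limsup (\<lambda>n. ereal (ln (real (a n)) / ln (real n)))"
    unfolding rep_growth_def a_def using False by (rule if_not_P)
  ultimately show ?thesis by simp
qed

lemma (in group) right_transversal_exists:
  assumes sub: "subgroup H G" and fin: "finite (rcosets H)"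
  obtains k t i0 where "right_transversal G H k t i0"
proof -
  have Hc: "H \<subseteq> carrier G" using subgroup.subset[OF sub] .
  define k where "k = card (rcosets H)"
  obtain f where f: "bij_betw f {0..<k} (rcosets H)"
    using ex_bij_betw_nat_finite[OF fin] unfolding k_def by blast
  define t where "t i = (if f i = H then \<one> else (SOME a. a \<in> carrier G \<and> f i = H #> a))" for i
  have t: "t i \<in> carrier G \<and> f i = H #> t i" if i: "i < k" for i
  proof (cases "f i = H")
    case True
    then show ?thesis unfolding t_def using coset_mult_one[OF Hc] by simp
  next
    case False
    have "f i \<in> rcosets H" using f i unfolding bij_betw_def by auto
    then have "\<exists>a. a \<in> carrier G \<and> f i = H #> a" unfolding RCOSETS_def by auto
    from someI_ex[OF this] show ?thesis unfolding t_def using False by simp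
  qed
  have "H \<in> rcosets H" using rcosetsI[OF Hc one_closed] coset_mult_one[OF Hc] by simp
  then have "H \<in> f ` {0..<k}" using f unfolding bij_betw_def by simp
  then obtain i0 where i0: "i0 < k" "f i0 = H" by (metis atLeastLessThan_iff imageE)
  have "\<exists>!j. j < k \<and> g \<otimes> inv (t j) \<in> H" if g: "g \<in> carrier G" for g
  proof -
    have "H #> g \<in> rcosets H" using rcosetsI[OF Hc g] .
    then have "H #> g \<in> f ` {0..<k}" using f unfolding bij_betw_def by simp
    then obtain j where j: "j < k" "f j = H #> g" by (metis atLeastLessThan_iff imageE)
    have "g \<in> H #> t j" using rcos_self[OF g sub] j t[OF j(1)] by simp
    then have gj: "g \<otimes> inv (t j) \<in> H"
      using subgroup.rcos_module_imp[OF sub is_group conjunct1[OF t[OF j(1)]]] g by simp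
    show ?thesis
    proof (rule ex1I[of _ j])
      fix j' assume j': "j' < k \<and> g \<otimes> inv (t j') \<in> H"
      have tj': "t j' \<in> carrier G" using t j' by simp
      have "g \<in> H #> t j'" using subgroup.rcos_module_rev[OF sub is_group tj' g] j' by simp
      then have "H #> t j' = H #> g" using repr_independence[OF _ tj' sub] by simp
      then have "f j' = f j" using t j' j by simp
      then show "j' = j" using f j j' unfolding bij_betw_def inj_on_def by auto
    qed (use j gj in simp)
  qed
  then have "right_transversal G H k t i0"
    unfolding right_transversal_def right_transversal_axioms_def
    using is_group sub t i0 by (auto simp: t_def)
  then show thesis by (rule that)
qed

theorem corollary4p5:
  fixes G :: "('g, 'b) monoid_scheme" and H :: "'g set"
  assumes "group G" and "fin_gen_group G"
    and "subgroup H G" and "finite (rcosets\<^bsub>G\<^esub> H)"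
  shows "rep_growth (G\<lparr>carrier := H\<rparr>) = rep_growth G"
proof -
  obtain k t i0 where "right_transversal G H k t i0"
    using group.right_transversal_exists[OF assms(1,3,4)] .
  then interpret right_transversal G H k t i0 .
  have "rep_growth G \<le> rep_growth subgrp"
    by (rule rep_growth_mono[where c = 1, OF index_pos]) (simp_all add: R_irr_le_index_mult_R_irr_subgroup)
  moreover have "rep_growth subgrp \<le> rep_growth G"
    using rep_growth_mono[OF index_pos index_pos] R_irr_subgroup_le_index_mult_R_irr by blast
  ultimately show ?thesis by simp
qed

end
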